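(* For every integer $n\ge3$ there is a partition $\pi$ of $\{0,1,\dots,2n\}\times\{0,1,\dots,2n\}$ consisting of the singleton $\{(0,0)\}$ and two-element sets such that $\pi$ is nondegenerate and the group $\Gamma_\pi$ is non-amenable and sofic. In particular there are infinitely many non-amenable $\mathrm{ULIE}_{\mathbb{F}_2}$ groups.
   Context: For a partition $\pi$ of $\{0,\dots,m-1\}\times\{0,\dots,n'-1\}$ (with $m,n'\ge 2$), $\Gamma_\pi$ is the group with generators $a_0,\dots,a_{m-1},b_0,\dots,b_{n'-1}$ and relations $a_0=b_0=1$ and $a_ib_j=a_{i'}b_{j'}$ whenever $(i,j)$ and $(i',j')$ lie in the same block of $\pi$. $\pi$ is nondegenerate if in $\Gamma_\pi$ the $a_i$ are pairwise distinct and the $b_j$ are pairwise distinct. Over the field $\mathbb{F}_2$ of two elements, the partitions that are minimally realizable (i.e., minimal under refinement among partitions for which each block containing $(0,0)$ has odd size and all other blocks have even size) are exactly those consisting of the singleton $\{(0,0)\}$ and two-element sets; an $\mathrm{ULIE}_{\mathbb{F}_2}$ group is a group $\Gamma_\pi$ for a nondegenerate such partition. *)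

theory Defs
  imports Complex_Main "HOL-Algebra.Group"
begin

datatype gen = GA nat | GB nat

fun valid_gen :: "nat \<Rightarrow> nat \<Rightarrow> gen \<Rightarrow> bool" where
  "valid_gen m n' (GA i) = (i < m)"
| "valid_gen m n' (GB j) = (j < n')"

text \<open>A letter is a generator together with a flag: True = the generator, False = its inverse.\<close>
type_synonym word = "(gen \<times> bool) list"

inductive weq :: "nat \<Rightarrow> nat \<Rightarrow> (nat \<times> nat) set set \<Rightarrow> word \<Rightarrow> word \<Rightarrow> bool"
  for m n' \<pi> where
  refl: "weq m n' \<pi> w w"
| sym: "weq m n' \<pi> u w \<Longrightarrow> weq m n' \<pi> w u"
| trans: "weq m n' \<pi> u v \<Longrightarrow> weq m n' \<pi> v w \<Longrightarrow> weq m n' \<pi> u w"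
| cancel: "valid_gen m n' x \<Longrightarrow>
    weq m n' \<pi> (u @ [(x, e), (x, \<not> e)] @ v) (u @ v)"
| rel_a0: "weq m n' \<pi> (u @ [(GA 0, True)] @ v) (u @ v)"
| rel_b0: "weq m n' \<pi> (u @ [(GB 0, True)] @ v) (u @ v)"
| rel_block: "P \<in> \<pi> \<Longrightarrow> (i, j) \<in> P \<Longrightarrow> (i', j') \<in> P \<Longrightarrow>
    weq m n' \<pi> (u @ [(GA i, True), (GB j, True)] @ v) (u @ [(GA i', True), (GB j', True)] @ v)"

definition wclass :: "nat \<Rightarrow> nat \<Rightarrow> (nat \<times> nat) set set \<Rightarrow> word \<Rightarrow> word set" where
  "wclass m n' \<pi> w = {w'. weq m n' \<pi> w w'}"

definition Gamma :: "nat \<Rightarrow> nat \<Rightarrow> (nat \<times> nat) set set \<Rightarrow> word set monoid" where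
  "Gamma m n' \<pi> =
    \<lparr> carrier = {wclass m n' \<pi> w | w. list_all (\<lambda>(x, e). valid_gen m n' x) w},
      mult = (\<lambda>X Y. wclass m n' \<pi> ((SOME u. u \<in> X) @ (SOME v. v \<in> Y))),
      one = wclass m n' \<pi> [] \<rparr>"

definition gen_a :: "nat \<Rightarrow> nat \<Rightarrow> (nat \<times> nat) set set \<Rightarrow> nat \<Rightarrow> word set" where
  "gen_a m n' \<pi> i = wclass m n' \<pi> [(GA i, True)]"

definition gen_b :: "nat \<Rightarrow> nat \<Rightarrow> (nat \<times> nat) set set \<Rightarrow> nat \<Rightarrow> word set" where
  "gen_b m n' \<pi> j = wclass m n' \<pi> [(GB j, True)]"

definition nondegenerate :: "nat \<Rightarrow> nat \<Rightarrow> (nat \<times> nat) set set \<Rightarrow> bool" where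
  "nondegenerate m n' \<pi> \<longleftrightarrow>
     (\<forall>i < m. \<forall>i' < m. i \<noteq> i' \<longrightarrow> gen_a m n' \<pi> i \<noteq> gen_a m n' \<pi> i') \<and>
     (\<forall>j < n'. \<forall>j' < n'. j \<noteq> j' \<longrightarrow> gen_b m n' \<pi> j \<noteq> gen_b m n' \<pi> j')"

definition is_partition :: "'a set set \<Rightarrow> 'a set \<Rightarrow> bool" where
  "is_partition \<pi> S \<longleftrightarrow> (\<Union>\<pi> = S) \<and> (\<forall>P\<in>\<pi>. P \<noteq> {}) \<and>
     (\<forall>P\<in>\<pi>. \<forall>Q\<in>\<pi>. P \<noteq> Q \<longrightarrow> P \<inter> Q = {})"

definition amenable :: "('a, 'b) monoid_scheme \<Rightarrow> bool" where
  "amenable G \<longleftrightarrow> (\<exists>\<mu> :: 'a set \<Rightarrow> real.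
     (\<forall>A \<subseteq> carrier G. \<mu> A \<ge> 0) \<and>
     \<mu> (carrier G) = 1 \<and>
     (\<forall>A B. A \<subseteq> carrier G \<longrightarrow> B \<subseteq> carrier G \<longrightarrow> A \<inter> B = {} \<longrightarrow> \<mu> (A \<union> B) = \<mu> A + \<mu> B) \<and>
     (\<forall>g \<in> carrier G. \<forall>A \<subseteq> carrier G. \<mu> ((\<lambda>x. g \<otimes>\<^bsub>G\<^esub> x) ` A) = \<mu> A))"

definition sofic :: "('a, 'b) monoid_scheme \<Rightarrow> bool" where
  "sofic G \<longleftrightarrow> (\<forall>F (\<epsilon>::real). finite F \<and> F \<subseteq> carrier G \<and> \<epsilon> > 0 \<longrightarrow>
     (\<exists>N::nat. N > 0 \<and> (\<exists>\<sigma> :: 'a \<Rightarrow> nat \<Rightarrow> nat.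
        (\<forall>g \<in> carrier G. bij_betw (\<sigma> g) {..<N} {..<N}) \<and>
        (\<forall>g \<in> F. \<forall>h \<in> F.
           real (card {x \<in> {..<N}. \<sigma> (g \<otimes>\<^bsub>G\<^esub> h) x \<noteq> \<sigma> g (\<sigma> h x)}) \<le> \<epsilon> * real N) \<and>
        (\<forall>g \<in> F. g \<noteq> \<one>\<^bsub>G\<^esub> \<longrightarrow>
           real (card {x \<in> {..<N}. \<sigma> g x = x}) \<le> \<epsilon> * real N))))"

end

theory Submission
  imports Defs "HOL-Algebra.Group_Action"
begin

(*
  Write the indices 1, ..., 2n as j = 2a + b + 1 with a < n and b < 2.  The partition pi_n pairs
  (j, 0) with (0, j), which forces a_j = b_j, and pairs the two inner cells sharing the key
  (a, (b + g) mod n, d) of the cell (2a + b + 1, 2g + d + 1).  In Gamma_pi the elements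
  P = a_1^-1 a_2 and W = a_1 then satisfy P^n = 1 and a_(2a+b+1) = P^a W P^b; conversely, the
  relations of pi_n hold whenever a_j is read as p^a w p^b with p^n = 1.  Hence every action of the
  free product C_n * Z = <p, w | p^n> is an action of Gamma_pi, and its action on the reduced words
  of C_n * Z is faithful: an element is the reduced word it sends the empty word to.

  Non-amenability: W and P W P^-1 play ping-pong on the reduced words starting with w^(+-1),
  respectively p w^(+-1).  Soficity: restricting to reduced words of bounded total w-exponent and completing
  the partial bijection w to a permutation gives finite actions of Gamma_pi that agree with the
  faithful one on any prescribed finite set, so Gamma_pi is residually finite, hence sofic.
  The construction works for every n >= 2.
*)

section \<open>Presented groups and their actions\<close>

lemma weq_append:
  assumes "weq m n' \<pi> u u'" "weq m n' \<pi> v v'"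
  shows "weq m n' \<pi> (u @ v) (u' @ v')"
proof -
  have context_closed: "weq m n' \<pi> (x @ u @ y) (x @ u' @ y)"
    if "weq m n' \<pi> u u'" for x y u u'
    using that
  proof (induction rule: weq.induct)
    case (trans u v w)
    from trans.IH show ?case by (rule weq.trans)
  next
    case (cancel z u e v)
    show ?case using weq.cancel[OF cancel, of \<pi> "x @ u" e "v @ y"] by simp
  next
    case (rel_a0 u v)
    show ?case using weq.rel_a0[of m n' \<pi> "x @ u" "v @ y"] by simp
  next
    case (rel_b0 u v)
    show ?case using weq.rel_b0[of m n' \<pi> "x @ u" "v @ y"] by simp
  next
    case (rel_block P i j i' j' u v)
    show ?case using weq.rel_block[OF rel_block, of m n' "x @ u" "v @ y"] by simp
  qed (simp_all add: weq.refl weq.sym)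
  from context_closed[OF assms(1), of "[]" v] context_closed[OF assms(2), of u' "[]"]
  have "weq m n' \<pi> (u @ v) (u' @ v)" "weq m n' \<pi> (u' @ v) (u' @ v')" by simp_all
  then show ?thesis by (rule weq.trans)
qed

lemma wclass_eq_iff: "wclass m n' \<pi> u = wclass m n' \<pi> v \<longleftrightarrow> weq m n' \<pi> u v"
proof
  assume "wclass m n' \<pi> u = wclass m n' \<pi> v"
  then show "weq m n' \<pi> u v" by (auto simp: wclass_def weq.refl)
next
  assume "weq m n' \<pi> u v"
  then show "wclass m n' \<pi> u = wclass m n' \<pi> v"
    unfolding wclass_def using weq.trans weq.sym[OF \<open>weq m n' \<pi> u v\<close>] by blast
qed

lemma weq_some_wclass: "weq m n' \<pi> u (SOME v. v \<in> wclass m n' \<pi> u)"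
  using someI[of "\<lambda>v. v \<in> wclass m n' \<pi> u" u] by (simp add: wclass_def weq.refl)

lemma mult_Gamma_wclass:
  "wclass m n' \<pi> u \<otimes>\<^bsub>Gamma m n' \<pi>\<^esub> wclass m n' \<pi> v = wclass m n' \<pi> (u @ v)"
  unfolding Gamma_def using weq_append[OF weq_some_wclass weq_some_wclass, of m n' \<pi> u v]
  by (simp add: wclass_eq_iff weq.sym)

lemma one_Gamma: "\<one>\<^bsub>Gamma m n' \<pi>\<^esub> = wclass m n' \<pi> []"
  by (simp add: Gamma_def)

abbreviation valid_word :: "nat \<Rightarrow> nat \<Rightarrow> word \<Rightarrow> bool" where
  "valid_word m n' \<equiv> list_all (\<lambda>(x, e). valid_gen m n' x)"

lemma carrier_Gamma: "carrier (Gamma m n' \<pi>) = {wclass m n' \<pi> w | w. valid_word m n' w}"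
  by (simp add: Gamma_def)

definition word_inv :: "word \<Rightarrow> word" where
  "word_inv u = rev (map (\<lambda>(x, e). (x, \<not> e)) u)"

lemma valid_word_inv: "valid_word m n' u \<Longrightarrow> valid_word m n' (word_inv u)"
  by (induction u) (auto simp: word_inv_def)

lemma weq_word_inv: "valid_word m n' u \<Longrightarrow> weq m n' \<pi> (word_inv u @ u) []"
proof (induction u rule: rev_induct)
  case (snoc l u)
  obtain x e where l: "l = (x, e)" by (cases l)
  have "weq m n' \<pi> ([(x, \<not> e)] @ (word_inv u @ u) @ [(x, e)]) ([(x, \<not> e)] @ [] @ [(x, e)])"
    using snoc by (intro weq_append weq.refl) auto
  then have "weq m n' \<pi> ((x, \<not> e) # word_inv u @ u @ [(x, e)]) [(x, \<not> e), (x, e)]"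
    by simp
  moreover have "weq m n' \<pi> [(x, \<not> e), (x, e)] []"
    using weq.cancel[of m n' x \<pi> "[]" "\<not> e" "[]"] snoc l by simp
  ultimately show ?case by (simp add: l word_inv_def weq.trans[of m n' \<pi> _ "[(x, \<not> e), (x, e)]"])
qed (simp add: word_inv_def weq.refl)

lemma group_Gamma: "group (Gamma m n' \<pi>)"
proof (rule groupI)
  let ?G = "Gamma m n' \<pi>"
  show "\<one>\<^bsub>?G\<^esub> \<in> carrier ?G" unfolding one_Gamma carrier_Gamma by fastforce
  fix x y z assume "x \<in> carrier ?G" "y \<in> carrier ?G" "z \<in> carrier ?G"
  then obtain u v w where uvw: "valid_word m n' u" "valid_word m n' v" "valid_word m n' w"
    "x = wclass m n' \<pi> u" "y = wclass m n' \<pi> v" "z = wclass m n' \<pi> w"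
    by (auto simp: carrier_Gamma)
  then show "x \<otimes>\<^bsub>?G\<^esub> y \<in> carrier ?G"
    unfolding carrier_Gamma by (auto simp: mult_Gamma_wclass intro!: exI[of _ "u @ v"])
  show "x \<otimes>\<^bsub>?G\<^esub> y \<otimes>\<^bsub>?G\<^esub> z = x \<otimes>\<^bsub>?G\<^esub> (y \<otimes>\<^bsub>?G\<^esub> z)"
    using uvw by (simp add: mult_Gamma_wclass)
  show "\<one>\<^bsub>?G\<^esub> \<otimes>\<^bsub>?G\<^esub> x = x" using uvw by (simp add: one_Gamma mult_Gamma_wclass)
  show "\<exists>y\<in>carrier ?G. y \<otimes>\<^bsub>?G\<^esub> x = \<one>\<^bsub>?G\<^esub>"
  proof (intro bexI)
    show "wclass m n' \<pi> (word_inv u) \<in> carrier ?G"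
      using valid_word_inv[OF uvw(1)] unfolding carrier_Gamma by blast
    have "wclass m n' \<pi> (word_inv u @ u) = wclass m n' \<pi> []"
      unfolding wclass_eq_iff by (rule weq_word_inv[OF uvw(1)])
    then show "wclass m n' \<pi> (word_inv u) \<otimes>\<^bsub>?G\<^esub> x = \<one>\<^bsub>?G\<^esub>"
      by (simp only: uvw(4) mult_Gamma_wclass one_Gamma)
  qed
qed

definition word_act :: "(gen \<times> bool \<Rightarrow> 'x \<Rightarrow> 'x) \<Rightarrow> word \<Rightarrow> 'x \<Rightarrow> 'x" where
  "word_act \<alpha> u = foldr (\<lambda>l f. \<alpha> l \<circ> f) u id"

lemma word_act_simps [simp]:
  "word_act \<alpha> [] = id"
  "word_act \<alpha> (l # u) = \<alpha> l \<circ> word_act \<alpha> u"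
  "word_act \<alpha> (u @ v) = word_act \<alpha> u \<circ> word_act \<alpha> v"
  by (induction u) (simp_all add: word_act_def o_assoc)

locale presentation_action =
  fixes m n' :: nat and \<pi> :: "(nat \<times> nat) set set" and T :: "'x set"
    and \<alpha> :: "gen \<times> bool \<Rightarrow> 'x \<Rightarrow> 'x"
  assumes closed: "y \<in> T \<Longrightarrow> \<alpha> l y \<in> T"
    and inverse: "y \<in> T \<Longrightarrow> \<alpha> (x, e) (\<alpha> (x, \<not> e) y) = y"
    and a0: "y \<in> T \<Longrightarrow> \<alpha> (GA 0, True) y = y"
    and b0: "y \<in> T \<Longrightarrow> \<alpha> (GB 0, True) y = y"
    and block: "P \<in> \<pi> \<Longrightarrow> (i, j) \<in> P \<Longrightarrow> (i', j') \<in> P \<Longrightarrow> y \<in> T \<Longrightarrow>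
      \<alpha> (GA i, True) (\<alpha> (GB j, True) y) = \<alpha> (GA i', True) (\<alpha> (GB j', True) y)"
begin

lemma word_act_closed: "y \<in> T \<Longrightarrow> word_act \<alpha> u y \<in> T"
  by (induction u) (auto intro: closed)

lemma word_act_weq: "weq m n' \<pi> u v \<Longrightarrow> y \<in> T \<Longrightarrow> word_act \<alpha> u y = word_act \<alpha> v y"
proof (induction arbitrary: y rule: weq.induct)
  case (cancel x u e v)
  then show ?case using inverse[OF word_act_closed] by simp
next
  case (rel_block P i j i' j' u v)
  then show ?case using block[OF rel_block.hyps word_act_closed[OF rel_block.prems]] by simp
qed (auto simp: a0 b0 word_act_closed)

definition act :: "word set \<Rightarrow> 'x \<Rightarrow> 'x" where
  "act Z = restrict (word_act \<alpha> (SOME u. u \<in> Z)) T"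

lemma act_wclass: "act (wclass m n' \<pi> u) = restrict (word_act \<alpha> u) T"
  unfolding act_def by (intro restrict_ext) (simp add: word_act_weq[OF weq_some_wclass, symmetric])

lemma act_mult_wclass:
  "act (wclass m n' \<pi> u \<otimes>\<^bsub>Gamma m n' \<pi>\<^esub> wclass m n' \<pi> v)
     = compose T (act (wclass m n' \<pi> u)) (act (wclass m n' \<pi> v))"
  by (auto simp: mult_Gamma_wclass act_wclass compose_def word_act_closed intro!: restrict_ext)

lemma act_Bij: "valid_word m n' u \<Longrightarrow> act (wclass m n' \<pi> u) \<in> Bij T"
proof -
  assume u: "valid_word m n' u"
  have inv_u: "word_inv (word_inv u) = u"
    by (simp add: word_inv_def rev_map comp_def case_prod_unfold)
  have "word_act \<alpha> (word_inv v) (word_act \<alpha> v y) = y" if "valid_word m n' v" "y \<in> T" for v y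
    using word_act_weq[OF weq_word_inv[OF that(1)] that(2)] by simp
  from this[OF u] this[OF valid_word_inv[OF u]]
  have "bij_betw (word_act \<alpha> u) T T"
    by (intro bij_betw_byWitness[where f'="word_act \<alpha> (word_inv u)"])
      (auto simp: inv_u word_act_closed)
  moreover have "bij_betw (restrict (word_act \<alpha> u) T) T T \<longleftrightarrow> bij_betw (word_act \<alpha> u) T T"
    by (rule bij_betw_cong) simp
  ultimately show ?thesis by (simp add: Bij_def act_wclass)
qed

lemma group_action_Gamma: "group_action (Gamma m n' \<pi>) T act"
  unfolding group_action_def group_hom_def group_hom_axioms_def
proof (intro conjI group_Gamma group_BijGroup homI)
  fix X assume "X \<in> carrier (Gamma m n' \<pi>)"
  then obtain u where "valid_word m n' u" "X = wclass m n' \<pi> u" by (auto simp: carrier_Gamma)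
  then show "act X \<in> carrier (BijGroup T)" by (simp add: BijGroup_def act_Bij)
next
  fix X Y assume "X \<in> carrier (Gamma m n' \<pi>)" "Y \<in> carrier (Gamma m n' \<pi>)"
  then obtain u v where "valid_word m n' u" "X = wclass m n' \<pi> u"
    "valid_word m n' v" "Y = wclass m n' \<pi> v" by (auto simp: carrier_Gamma)
  then show "act (X \<otimes>\<^bsub>Gamma m n' \<pi>\<^esub> Y) = act X \<otimes>\<^bsub>BijGroup T\<^esub> act Y"
    by (simp add: BijGroup_def act_Bij act_mult_wclass)
qed

end

section \<open>Ping-pong and finite quotients\<close>

context group_action
begin

interpretation G: group G
  using group_hom group_hom.axioms(1) by blast

lemma act_one: "x \<in> E \<Longrightarrow> \<phi> \<one> x = x"
  by (metis id_eq_one restrict_apply')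

lemma act_inv_cancel: "g \<in> carrier G \<Longrightarrow> x \<in> E \<Longrightarrow> \<phi> (inv g) (\<phi> g x) = x"
  by (simp add: composition_rule[symmetric] act_one)

lemma act_nat_pow: "g \<in> carrier G \<Longrightarrow> x \<in> E \<Longrightarrow> \<phi> (g [^] (k::nat)) x = (\<phi> g ^^ k) x"
proof (induction k arbitrary: x)
  case (Suc k)
  then show ?case
    by (simp add: composition_rule G.nat_pow_Suc2 funpow_swap1 element_image del: nat_pow_Suc)
qed (simp add: act_one)

text \<open>A left-invariant mean on \<open>G\<close>, pushed forward along the orbit map of \<open>x\<^sub>0\<close>.\<close>
lemma amenable_imp_orbit_mean:
  assumes "amenable G" "x0 \<in> E"
  obtains \<nu> :: "'c set \<Rightarrow> real" where "\<nu> E = 1" "\<And>B. \<nu> B \<ge> 0"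
    "\<And>B C. B \<inter> C = {} \<Longrightarrow> \<nu> (B \<union> C) = \<nu> B + \<nu> C"
    "\<And>g B C. g \<in> carrier G \<Longrightarrow> \<phi> g ` B \<subseteq> C \<Longrightarrow> \<nu> B \<le> \<nu> C"
proof -
  obtain \<mu> :: "'a set \<Rightarrow> real" where \<mu>:
    "(\<forall>A \<subseteq> carrier G. \<mu> A \<ge> 0) \<and> \<mu> (carrier G) = 1 \<and>
     (\<forall>A B. A \<subseteq> carrier G \<longrightarrow> B \<subseteq> carrier G \<longrightarrow> A \<inter> B = {} \<longrightarrow> \<mu> (A \<union> B) = \<mu> A + \<mu> B) \<and>
     (\<forall>g \<in> carrier G. \<forall>A \<subseteq> carrier G. \<mu> ((\<lambda>x. g \<otimes> x) ` A) = \<mu> A)"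
    using assms(1) unfolding amenable_def by (elim exE) (erule that)
  then have pos: "\<And>A. A \<subseteq> carrier G \<Longrightarrow> \<mu> A \<ge> 0" and tot: "\<mu> (carrier G) = 1"
    and add: "\<And>A B. A \<subseteq> carrier G \<Longrightarrow> B \<subseteq> carrier G \<Longrightarrow> A \<inter> B = {} \<Longrightarrow> \<mu> (A \<union> B) = \<mu> A + \<mu> B"
    and inv: "\<And>g A. g \<in> carrier G \<Longrightarrow> A \<subseteq> carrier G \<Longrightarrow> \<mu> ((\<lambda>x. g \<otimes> x) ` A) = \<mu> A"
    by simp_all
  have mono: "\<mu> A \<le> \<mu> B" if "A \<subseteq> B" "B \<subseteq> carrier G" for A B
  proof -
    have "\<mu> (A \<union> (B - A)) = \<mu> A + \<mu> (B - A)" using that by (intro add) auto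
    moreover have "A \<union> (B - A) = B" using that by blast
    ultimately show ?thesis using pos[of "B - A"] that by auto
  qed
  define pre where "pre B = {g \<in> carrier G. \<phi> g x0 \<in> B}" for B
  have pre_carrier: "pre B \<subseteq> carrier G" for B by (auto simp: pre_def)
  show ?thesis
  proof (rule that[of "\<lambda>B. \<mu> (pre B)"])
    have "pre E = carrier G" using assms(2) by (auto simp: pre_def element_image)
    then show "\<mu> (pre E) = 1" by (simp add: tot)
  next
    show "\<mu> (pre B) \<ge> 0" for B by (rule pos[OF pre_carrier])
  next
    fix B C :: "'c set" assume "B \<inter> C = {}"
    then have "pre (B \<union> C) = pre B \<union> pre C" "pre B \<inter> pre C = {}" by (auto simp: pre_def)
    then show "\<mu> (pre (B \<union> C)) = \<mu> (pre B) + \<mu> (pre C)" using add pre_carrier by simp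
  next
    fix g B C assume g: "g \<in> carrier G" and BC: "\<phi> g ` B \<subseteq> C"
    have "(\<lambda>h. g \<otimes> h) ` pre B \<subseteq> pre C"
    proof
      fix k assume "k \<in> (\<lambda>h. g \<otimes> h) ` pre B"
      then obtain h where h: "h \<in> carrier G" "\<phi> h x0 \<in> B" "k = g \<otimes> h" by (auto simp: pre_def)
      then have "\<phi> k x0 = \<phi> g (\<phi> h x0)" using g assms(2) by (simp add: composition_rule)
      then show "k \<in> pre C" using h g BC by (auto simp: pre_def)
    qed
    then have "\<mu> ((\<lambda>h. g \<otimes> h) ` pre B) \<le> \<mu> (pre C)" using mono pre_carrier by blast
    then show "\<mu> (pre B) \<le> \<mu> (pre C)" using inv[OF g pre_carrier] by simp
  qed
qed

text \<open>Each ping-pong inclusion forces \<open>\<nu> S\<^sub>1 + \<nu> S\<^sub>2 \<ge> 1\<close> resp. \<open>\<nu> T\<^sub>1 + \<nu> T\<^sub>2 \<ge> 1\<close> for the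
  mean \<open>\<nu>\<close> on \<open>E\<close>, which is more mass than there is.\<close>
lemma not_amenable_if_ping_pong:
  assumes x0: "x0 \<in> E" and st: "s \<in> carrier G" "t \<in> carrier G"
    and sub: "S1 \<union> S2 \<union> T1 \<union> T2 \<subseteq> E"
    and disj: "S1 \<inter> S2 = {}" "T1 \<inter> T2 = {}" "(S1 \<union> S2) \<inter> (T1 \<union> T2) = {}"
    and ping: "\<phi> s ` (E - S2) \<subseteq> S1" and pong: "\<phi> t ` (E - T2) \<subseteq> T1"
  shows "\<not> amenable G"
proof
  assume "amenable G"
  then obtain \<nu> :: "'c set \<Rightarrow> real" where \<nu>_E: "\<nu> E = 1" and \<nu>_pos: "\<And>B. \<nu> B \<ge> 0"
    and \<nu>_add: "\<And>B C. B \<inter> C = {} \<Longrightarrow> \<nu> (B \<union> C) = \<nu> B + \<nu> C"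
    and \<nu>_shift: "\<And>g B C. g \<in> carrier G \<Longrightarrow> \<phi> g ` B \<subseteq> C \<Longrightarrow> \<nu> B \<le> \<nu> C"
    using amenable_imp_orbit_mean[OF _ x0] by blast
  have \<nu>_compl: "\<nu> (E - B) = 1 - \<nu> B" if "B \<subseteq> E" for B
  proof -
    have "(E - B) \<union> B = E" using that by blast
    moreover have "(E - B) \<inter> B = {}" by blast
    ultimately show ?thesis using \<nu>_add[of "E - B" B] \<nu>_E by simp
  qed
  let ?U = "S1 \<union> S2 \<union> (T1 \<union> T2)"
  have "\<nu> (E - S2) \<le> \<nu> S1" "\<nu> (E - T2) \<le> \<nu> T1"
    using \<nu>_shift[OF st(1) ping] \<nu>_shift[OF st(2) pong] by simp_all
  moreover have "\<nu> (E - S2) = 1 - \<nu> S2" "\<nu> (E - T2) = 1 - \<nu> T2" "\<nu> (E - ?U) = 1 - \<nu> ?U"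
    using sub by (simp_all add: \<nu>_compl)
  moreover have "\<nu> ?U = \<nu> S1 + \<nu> S2 + (\<nu> T1 + \<nu> T2)"
    using \<nu>_add[OF disj(3)] \<nu>_add[OF disj(1)] \<nu>_add[OF disj(2)] by simp
  ultimately show False using \<nu>_pos[of "E - ?U"] by linarith
qed

end

text \<open>The left regular representation of the finite group \<open>H\<close>, pulled back along \<open>h\<close>.\<close>
lemma (in group) permutation_rep_of_finite_quotient:
  assumes "group H" "finite (carrier H)" "h \<in> hom G H"
  obtains N :: nat and \<sigma> where "N > 0" "\<And>g. g \<in> carrier G \<Longrightarrow> bij_betw (\<sigma> g) {..<N} {..<N}"
    "\<And>g g' i. g \<in> carrier G \<Longrightarrow> g' \<in> carrier G \<Longrightarrow> i < N \<Longrightarrow> \<sigma> (g \<otimes> g') i = \<sigma> g (\<sigma> g' i)"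
    "\<And>g i. g \<in> carrier G \<Longrightarrow> h g \<noteq> \<one>\<^bsub>H\<^esub> \<Longrightarrow> i < N \<Longrightarrow> \<sigma> g i \<noteq> i"
proof -
  interpret H: group H by (rule assms(1))
  interpret h: group_hom G H h by unfold_locales (rule assms(3))
  define N where "N = card (carrier H)"
  obtain e where e: "bij_betw e {..<N} (carrier H)"
    using ex_bij_betw_nat_finite[OF assms(2)] by (auto simp: N_def atLeast0LessThan)
  define e' where "e' = inv_into {..<N} e"
  have e'_e: "e' (e i) = i" if "i < N" for i
    using e that by (simp add: e'_def bij_betw_inv_into_left)
  have e_e': "e (e' y) = y" "e' y < N" if "y \<in> carrier H" for y
    using e that bij_betwE[OF bij_betw_inv_into[OF e]] by (auto simp: e'_def bij_betw_inv_into_right)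
  have e_carrier: "e i \<in> carrier H" if "i < N" for i using e that bij_betwE by blast
  define \<sigma> where "\<sigma> g i = e' (h g \<otimes>\<^bsub>H\<^esub> e i)" for g i
  have \<sigma>_mult: "\<sigma> (g \<otimes> g') i = \<sigma> g (\<sigma> g' i)" if "g \<in> carrier G" "g' \<in> carrier G" "i < N" for g g' i
    using that by (simp add: \<sigma>_def e_e' e_carrier H.m_assoc)
  show ?thesis
  proof (rule that[of N \<sigma>])
    show "N > 0" using assms(2) N_def card_gt_0_iff by blast
  next
    fix g assume g: "g \<in> carrier G"
    have \<sigma>_inv: "\<sigma> a (\<sigma> b i) = i" if "a \<in> carrier G" "b \<in> carrier G" "a \<otimes> b = \<one>" "i < N" for a b i
      using \<sigma>_mult[of a b i] that by (simp add: \<sigma>_def e'_e e_carrier)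
    have \<sigma>_range: "\<sigma> a ` {..<N} \<subseteq> {..<N}" if "a \<in> carrier G" for a
      using that by (auto simp: \<sigma>_def e_e' e_carrier)
    show "bij_betw (\<sigma> g) {..<N} {..<N}"
    proof (rule bij_betw_byWitness[where f'="\<sigma> (inv g)"])
      show "\<forall>i\<in>{..<N}. \<sigma> (inv g) (\<sigma> g i) = i" "\<forall>i\<in>{..<N}. \<sigma> g (\<sigma> (inv g) i) = i"
        using g \<sigma>_inv by auto
    qed (use g \<sigma>_range in auto)
  next
    fix g i assume g: "g \<in> carrier G" "h g \<noteq> \<one>\<^bsub>H\<^esub>" and i: "i < N"
    show "\<sigma> g i \<noteq> i"
    proof
      assume "\<sigma> g i = i"
      then have "h g \<otimes>\<^bsub>H\<^esub> e i = e i"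
        using i g e_e'[of "h g \<otimes>\<^bsub>H\<^esub> e i"] by (auto simp: \<sigma>_def e_carrier)
      then show False using g i e_carrier by (auto simp: H.r_cancel_one')
    qed
  qed (rule \<sigma>_mult)
qed

text \<open>The permutation representations of finite quotients approximate \<open>G\<close> exactly (\<open>\<epsilon> = 0\<close>).\<close>
lemma (in group) sofic_if_residually_finite:
  assumes "\<And>F. finite F \<Longrightarrow> F \<subseteq> carrier G \<Longrightarrow> \<exists>(H :: ('c, 'd) monoid_scheme) h.
    group H \<and> finite (carrier H) \<and> h \<in> hom G H \<and> (\<forall>g\<in>F. g \<noteq> \<one> \<longrightarrow> h g \<noteq> \<one>\<^bsub>H\<^esub>)"
  shows "sofic G"
  unfolding sofic_def
proof (intro allI impI)
  fix F and \<epsilon> :: real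
  assume F: "finite F \<and> F \<subseteq> carrier G \<and> \<epsilon> > 0"
  then obtain H :: "('c, 'd) monoid_scheme" and h where H: "group H" "finite (carrier H)"
    "h \<in> hom G H" and sep: "\<forall>g\<in>F. g \<noteq> \<one> \<longrightarrow> h g \<noteq> \<one>\<^bsub>H\<^esub>"
    using assms by blast
  obtain N :: nat and \<sigma> where N: "N > 0" and bij: "\<And>g. g \<in> carrier G \<Longrightarrow> bij_betw (\<sigma> g) {..<N} {..<N}"
    and mult: "\<And>g g' i. g \<in> carrier G \<Longrightarrow> g' \<in> carrier G \<Longrightarrow> i < N \<Longrightarrow> \<sigma> (g \<otimes> g') i = \<sigma> g (\<sigma> g' i)"
    and free: "\<And>g i. g \<in> carrier G \<Longrightarrow> h g \<noteq> \<one>\<^bsub>H\<^esub> \<Longrightarrow> i < N \<Longrightarrow> \<sigma> g i \<noteq> i"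
    by (rule permutation_rep_of_finite_quotient[OF H]) blast
  show "\<exists>N>0. \<exists>\<sigma>. (\<forall>g\<in>carrier G. bij_betw (\<sigma> g) {..<N} {..<N}) \<and>
    (\<forall>g\<in>F. \<forall>h\<in>F. real (card {x \<in> {..<N}. \<sigma> (g \<otimes> h) x \<noteq> \<sigma> g (\<sigma> h x)}) \<le> \<epsilon> * real N) \<and>
    (\<forall>g\<in>F. g \<noteq> \<one> \<longrightarrow> real (card {x \<in> {..<N}. \<sigma> g x = x}) \<le> \<epsilon> * real N)"
  proof (rule exI[of _ N], intro conjI exI[of _ \<sigma>] ballI impI)
    fix g g' assume "g \<in> F" "g' \<in> F"
    then have empty: "{x \<in> {..<N}. \<sigma> (g \<otimes> g') x \<noteq> \<sigma> g (\<sigma> g' x)} = {}" using F mult by blast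
    show "real (card {x \<in> {..<N}. \<sigma> (g \<otimes> g') x \<noteq> \<sigma> g (\<sigma> g' x)}) \<le> \<epsilon> * real N"
      unfolding empty using F by simp
  next
    fix g assume "g \<in> F" "g \<noteq> \<one>"
    then have "g \<in> carrier G" "h g \<noteq> \<one>\<^bsub>H\<^esub>" using F sep by auto
    then have empty: "{x \<in> {..<N}. \<sigma> g x = x} = {}" using free by blast
    show "real (card {x \<in> {..<N}. \<sigma> g x = x}) \<le> \<epsilon> * real N"
      unfolding empty using F by simp
  qed (use N bij in auto)
qed

lemma finite_carrier_BijGroup: "finite S \<Longrightarrow> finite (carrier (BijGroup S))"
proof -
  assume S: "finite S"
  have "carrier (BijGroup S) \<subseteq> S \<rightarrow>\<^sub>E S"
    by (auto simp: BijGroup_def PiE_def dest: Bij_imp_extensional Bij_imp_funcset)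
  then show ?thesis by (rule finite_subset) (intro finite_PiE S)
qed

section \<open>The partition\<close>

definition inner_cells :: "nat \<Rightarrow> (nat \<times> nat) set" where
  "inner_cells n = {1..2*n} \<times> {1..2*n}"

text \<open>The cell \<open>(2a+b+1, 2g+d+1)\<close> stands for \<open>p\<^sup>a w p\<^bsup>b+g\<^esup> w p\<^sup>d\<close>; its key records the three
  exponents, with \<open>b + g\<close> taken mod \<open>n\<close>.\<close>
definition cell_key :: "nat \<Rightarrow> nat \<times> nat \<Rightarrow> nat \<times> nat \<times> nat" where
  "cell_key n c = ((fst c - 1) div 2, ((fst c - 1) mod 2 + (snd c - 1) div 2) mod n, (snd c - 1) mod 2)"

definition pi_n :: "nat \<Rightarrow> (nat \<times> nat) set set" where
  "pi_n n = {{(0, 0)}} \<union> {{(j, 0), (0, j)} | j. 1 \<le> j \<and> j \<le> 2*n}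
     \<union> {{c, d} | c d. c \<in> inner_cells n \<and> d \<in> inner_cells n \<and> c \<noteq> d \<and> cell_key n c = cell_key n d}"

definition idx :: "nat \<Rightarrow> nat \<Rightarrow> nat" where
  "idx a b = 2*a + b + 1"

lemma Suc_pred_mod:
  fixes g n :: nat
  assumes "g < n"
  shows "(1 + (g + n - 1) mod n) mod n = g"
proof -
  have "(1 + (g + n - 1) mod n) mod n = (1 + (g + n - 1)) mod n" by (rule mod_add_right_eq)
  also have "1 + (g + n - 1) = g + n" using assms by simp
  finally show ?thesis using assms by simp
qed

lemma cell_key_idx: "b < 2 \<Longrightarrow> d < 2 \<Longrightarrow> cell_key n (idx a b, idx g d) = (a, (b + g) mod n, d)"
  by (simp add: cell_key_def idx_def)

lemma idx_inner_cells:
  "a < n \<Longrightarrow> b < 2 \<Longrightarrow> g < n \<Longrightarrow> d < 2 \<Longrightarrow> (idx a b, idx g d) \<in> inner_cells n"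
  by (auto simp: inner_cells_def idx_def)

definition key_fiber :: "nat \<Rightarrow> nat \<times> nat \<Rightarrow> (nat \<times> nat) set" where
  "key_fiber n c = {d \<in> inner_cells n. cell_key n d = cell_key n c}"

lemma inner_cell_idx:
  assumes "c \<in> inner_cells n"
  obtains a b g d where "c = (idx a b, idx g d)" "a < n" "b < 2" "g < n" "d < 2"
proof
  show "c = (idx ((fst c - 1) div 2) ((fst c - 1) mod 2), idx ((snd c - 1) div 2) ((snd c - 1) mod 2))"
    using assms by (cases c) (auto simp: inner_cells_def idx_def)
qed (use assms in \<open>auto simp: inner_cells_def\<close>)

lemma key_fiber_same_parity:
  assumes "a < n" "b < 2" "g < n" "d < 2" "g' < n" "d' < 2"
    and "cell_key n (idx a b, idx g d) = cell_key n (idx a' b, idx g' d')"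
  shows "a' = a \<and> g' = g \<and> d' = d"
proof -
  have "a' = a" "d' = d" "(b + g) mod n = (b + g') mod n"
    using assms(7) assms(2,4,6) by (simp_all add: cell_key_idx)
  moreover have "g' = g"
  proof (cases "b = 0")
    case False
    then have "b = 1" using assms(2) by simp
    then have "Suc g mod n = Suc g' mod n" using \<open>(b + g) mod n = (b + g') mod n\<close> by simp
    then show ?thesis using assms(3,5) by (simp add: mod_Suc split: if_splits)
  qed (use \<open>(b + g) mod n = (b + g') mod n\<close> assms(3,5) in simp)
  ultimately show ?thesis by simp
qed

lemma key_fiber_partner:
  assumes "a < n" "b < 2" "g < n" "d < 2"
  obtains g' where "g' < n" "cell_key n (idx a (1 - b), idx g' d) = cell_key n (idx a b, idx g d)"
proof (cases "b = 0")
  case True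
  show ?thesis
    by (rule that[of "(g + n - 1) mod n"]) (use True assms Suc_pred_mod[OF assms(3)] in \<open>simp_all add: cell_key_idx\<close>)
next
  case False
  then have "b = 1" using assms(2) by simp
  then show ?thesis
    by (intro that[of "(g + 1) mod n"]) (use assms in \<open>simp_all add: cell_key_idx mod_add_right_eq\<close>)
qed

lemma key_fiber_pair:
  assumes "c \<in> inner_cells n"
  obtains d where "d \<noteq> c" "key_fiber n c = {c, d}"
proof -
  obtain a b g d where c: "c = (idx a b, idx g d)" "a < n" "b < 2" "g < n" "d < 2"
    using assms by (rule inner_cell_idx)
  obtain g' where g': "g' < n" and key: "cell_key n (idx a (1 - b), idx g' d) = cell_key n c"
    using key_fiber_partner[OF c(2-5)] c(1) by blast
  let ?c' = "(idx a (1 - b), idx g' d)"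
  have "key_fiber n c \<subseteq> {c, ?c'}"
  proof
    fix e assume "e \<in> key_fiber n c"
    then have e: "e \<in> inner_cells n" "cell_key n e = cell_key n c" by (auto simp: key_fiber_def)
    obtain a' b' h d' where e': "e = (idx a' b', idx h d')" "a' < n" "b' < 2" "h < n" "d' < 2"
      using e(1) by (rule inner_cell_idx)
    show "e \<in> {c, ?c'}"
    proof (cases "b' = b")
      case True
      then show ?thesis using key_fiber_same_parity[of a n b g d h d' a'] e(2) c e' by auto
    next
      case False
      then have "b' = 1 - b" using c(3) e'(3) by auto
      then show ?thesis using key_fiber_same_parity[of a n "1 - b" g' d h d' a'] e(2) key c e' g' by auto
    qed
  qed
  moreover have "{c, ?c'} \<subseteq> key_fiber n c"
    using assms key c g' by (auto simp: key_fiber_def intro: idx_inner_cells)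
  moreover have "?c' \<noteq> c" using c(1,3) by (auto simp: idx_def) presburger
  ultimately show ?thesis using that by blast
qed

lemma key_fiber_in_pi_n:
  assumes "c \<in> inner_cells n"
  shows "key_fiber n c \<in> pi_n n"
proof -
  obtain d where "d \<noteq> c" "key_fiber n c = {c, d}" using key_fiber_pair[OF assms] .
  moreover have "d \<in> inner_cells n" "cell_key n d = cell_key n c"
    using calculation(2) by (auto simp: key_fiber_def)
  ultimately show ?thesis using assms unfolding pi_n_def by blast
qed

lemma pi_n_block_inner:
  assumes "P \<in> pi_n n" "z \<in> P" "z \<in> inner_cells n"
  shows "P = key_fiber n z"
proof -
  obtain c d where P: "P = {c, d}" "c \<in> inner_cells n" "d \<in> inner_cells n" "c \<noteq> d"
    "cell_key n c = cell_key n d"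
    using assms unfolding pi_n_def by (auto simp: inner_cells_def)
  obtain d' where d': "d' \<noteq> c" "key_fiber n c = {c, d'}" using key_fiber_pair[OF P(2)] .
  have "d \<in> key_fiber n c" using P by (simp add: key_fiber_def)
  then have "P = key_fiber n c" using P d' by auto
  moreover have "key_fiber n z = key_fiber n c"
    using assms(2) calculation by (auto simp: key_fiber_def)
  ultimately show ?thesis by simp
qed

lemma pi_n_block_outer:
  assumes "P \<in> pi_n n" "z \<in> P" "z \<notin> inner_cells n"
  shows "P = (if z = (0, 0) then {(0, 0)} else {(fst z + snd z, 0), (0, fst z + snd z)})"
  using assms unfolding pi_n_def by (auto simp: inner_cells_def)

lemma is_partition_pi_n: "is_partition (pi_n n) ({0..2*n} \<times> {0..2*n})"
  unfolding is_partition_def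
proof (intro conjI ballI impI)
  show "\<Union> (pi_n n) = {0..2*n} \<times> {0..2*n}"
  proof
    show "\<Union> (pi_n n) \<subseteq> {0..2*n} \<times> {0..2*n}" by (auto simp: pi_n_def inner_cells_def)
  next
    show "{0..2*n} \<times> {0..2*n} \<subseteq> \<Union> (pi_n n)"
    proof
      fix z assume z: "z \<in> {0..2*n} \<times> {0..2*n}"
      show "z \<in> \<Union> (pi_n n)"
      proof (cases "z \<in> inner_cells n")
        case True
        then have "z \<in> key_fiber n z" by (simp add: key_fiber_def)
        then show ?thesis using key_fiber_in_pi_n[OF True] by blast
      next
        case False
        obtain a b where ab: "z = (a, b)" "a \<le> 2*n" "b \<le> 2*n" "a = 0 \<or> b = 0"
          using z False by (cases z) (auto simp: inner_cells_def)
        have "{(a + b, 0), (0, a + b)} \<in> pi_n n" if "a + b \<noteq> 0"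
          using that ab unfolding pi_n_def by auto
        moreover have "{(0, 0)} \<in> pi_n n" by (simp add: pi_n_def)
        ultimately show ?thesis using ab by (cases "a + b = 0") auto
      qed
    qed
  qed
next
  fix P assume "P \<in> pi_n n"
  then show "P \<noteq> {}" by (auto simp: pi_n_def)
next
  fix P Q assume PQ: "P \<in> pi_n n" "Q \<in> pi_n n" "P \<noteq> Q"
  show "P \<inter> Q = {}"
  proof (rule ccontr)
    assume "P \<inter> Q \<noteq> {}"
    then obtain z where z: "z \<in> P" "z \<in> Q" by blast
    have "P = Q"
    proof (cases "z \<in> inner_cells n")
      case True
      then show ?thesis using pi_n_block_inner[OF PQ(1) z(1)] pi_n_block_inner[OF PQ(2) z(2)]
        by simp
    next
      case False
      then show ?thesis using pi_n_block_outer[OF PQ(1) z(1)] pi_n_block_outer[OF PQ(2) z(2)]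
        by simp
    qed
    with PQ(3) show False by simp
  qed
qed

lemma card_pi_n_block: "P \<in> pi_n n \<Longrightarrow> P \<noteq> {(0, 0)} \<Longrightarrow> card P = 2"
  by (auto simp: pi_n_def)

fun gen_index :: "gen \<Rightarrow> nat" where
  "gen_index (GA j) = j"
| "gen_index (GB j) = j"

section \<open>Actions of the free product\<close>

lemma funpow_mod_order:
  assumes "\<And>y. y \<in> T \<Longrightarrow> (f ^^ n) y = y" "x \<in> T"
  shows "(f ^^ k) x = (f ^^ (k mod n)) x"
proof -
  have "(f ^^ (n * q)) x = x" for q
    by (induction q) (simp_all add: funpow_add assms)
  moreover have "(f ^^ k) x = (f ^^ (k mod n + n * (k div n))) x" by simp
  ultimately show ?thesis by (simp only: funpow_add o_apply)
qed

text \<open>An action of \<open>C\<^sub>n * \<int>\<close> on \<open>T\<close>: \<open>p\<close> has order dividing \<open>n\<close>; the inverses \<open>p'\<close>, \<open>w'\<close> are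
  explicit parameters.\<close>
locale free_product_action =
  fixes n :: nat and T :: "'x set" and p p' w w' :: "'x \<Rightarrow> 'x"
  assumes p_closed: "x \<in> T \<Longrightarrow> p x \<in> T" and p'_closed: "x \<in> T \<Longrightarrow> p' x \<in> T"
    and w_closed: "x \<in> T \<Longrightarrow> w x \<in> T" and w'_closed: "x \<in> T \<Longrightarrow> w' x \<in> T"
    and p_p': "x \<in> T \<Longrightarrow> p (p' x) = x" and p'_p: "x \<in> T \<Longrightarrow> p' (p x) = x"
    and w_w': "x \<in> T \<Longrightarrow> w (w' x) = x" and w'_w: "x \<in> T \<Longrightarrow> w' (w x) = x"
    and p_order: "x \<in> T \<Longrightarrow> (p ^^ n) x = x"
begin

lemma p_pow_closed: "x \<in> T \<Longrightarrow> (p ^^ k) x \<in> T"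
  by (induction k) (simp_all add: p_closed)

lemma p'_pow_closed: "x \<in> T \<Longrightarrow> (p' ^^ k) x \<in> T"
  by (induction k) (simp_all add: p'_closed)

lemma p'_pow_p_pow: "x \<in> T \<Longrightarrow> (p' ^^ k) ((p ^^ k) x) = x"
proof (induction k arbitrary: x)
  case (Suc k)
  have "(p' ^^ Suc k) ((p ^^ Suc k) x) = (p' ^^ k) (p' (p ((p ^^ k) x)))"
    by (simp add: funpow_swap1)
  then show ?case using Suc p'_p p_pow_closed by simp
qed simp

lemma p_pow_p'_pow: "x \<in> T \<Longrightarrow> (p ^^ k) ((p' ^^ k) x) = x"
proof (induction k arbitrary: x)
  case (Suc k)
  have "(p ^^ Suc k) ((p' ^^ Suc k) x) = (p ^^ k) (p (p' ((p' ^^ k) x)))"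
    by (simp add: funpow_swap1)
  then show ?case using Suc p_p' p'_pow_closed by simp
qed simp

definition index_act :: "nat \<Rightarrow> bool \<Rightarrow> 'x \<Rightarrow> 'x" where
  "index_act j e = (if 1 \<le> j \<and> j \<le> 2*n then
     (if e then (p ^^ ((j-1) div 2)) \<circ> w \<circ> (p ^^ ((j-1) mod 2))
      else (p' ^^ ((j-1) mod 2)) \<circ> w' \<circ> (p' ^^ ((j-1) div 2))) else id)"

definition letter_act :: "gen \<times> bool \<Rightarrow> 'x \<Rightarrow> 'x" where
  "letter_act l = index_act (gen_index (fst l)) (snd l)"

lemma index_act_closed: "x \<in> T \<Longrightarrow> index_act j e x \<in> T"
  by (auto simp: index_act_def intro!: p_pow_closed p'_pow_closed w_closed w'_closed)

lemma index_act_inverse: "x \<in> T \<Longrightarrow> index_act j e (index_act j (\<not> e) x) = x"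
  by (cases e) (auto simp: index_act_def p'_pow_p_pow p_pow_p'_pow w_w' w'_w
      p_pow_closed p'_pow_closed w_closed w'_closed)

lemma index_act_cell:
  assumes "c \<in> inner_cells n" "x \<in> T"
  shows "index_act (fst c) True (index_act (snd c) True x)
    = (p ^^ fst (cell_key n c)) (w ((p ^^ fst (snd (cell_key n c))) (w ((p ^^ snd (snd (cell_key n c))) x))))"
proof -
  obtain i j where c: "c = (i, j)" "1 \<le> i" "i \<le> 2*n" "1 \<le> j" "j \<le> 2*n"
    using assms(1) by (cases c) (auto simp: inner_cells_def)
  let ?y = "w ((p ^^ ((j-1) mod 2)) x)"
  have "(p ^^ ((i-1) mod 2)) ((p ^^ ((j-1) div 2)) ?y) = (p ^^ ((i-1) mod 2 + (j-1) div 2)) ?y"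
    by (simp add: funpow_add)
  also have "\<dots> = (p ^^ (((i-1) mod 2 + (j-1) div 2) mod n)) ?y"
    by (rule funpow_mod_order[where T=T, OF p_order w_closed[OF p_pow_closed[OF assms(2)]]])
  finally show ?thesis using c by (simp add: index_act_def cell_key_def)
qed

sublocale presentation_action "2*n+1" "2*n+1" "pi_n n" T letter_act
proof
  fix y l assume "y \<in> T" then show "letter_act l y \<in> T"
    by (simp add: letter_act_def index_act_closed)
next
  fix y x e assume "y \<in> T" then show "letter_act (x, e) (letter_act (x, \<not> e) y) = y"
    by (simp add: letter_act_def index_act_inverse)
next
  fix y show "letter_act (GA 0, True) y = y" "letter_act (GB 0, True) y = y"
    by (simp_all add: letter_act_def index_act_def)
next
  fix P i j i' j' y
  assume P: "P \<in> pi_n n" "(i, j) \<in> P" "(i', j') \<in> P" and y: "y \<in> T"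
  consider "P = {(0, 0)}" | k where "P = {(k, 0), (0, k)}"
    | c d where "P = {c, d}" "c \<in> inner_cells n" "d \<in> inner_cells n" "cell_key n c = cell_key n d"
    using P(1) unfolding pi_n_def by blast
  then show "letter_act (GA i, True) (letter_act (GB j, True) y)
    = letter_act (GA i', True) (letter_act (GB j', True) y)"
  proof cases
    case 1
    then show ?thesis using P by simp
  next
    case 2
    then have "(i = k \<and> j = 0 \<or> i = 0 \<and> j = k) \<and> (i' = k \<and> j' = 0 \<or> i' = 0 \<and> j' = k)"
      using P by simp
    then show ?thesis by (auto simp: letter_act_def index_act_def)
  next
    case 3
    then have ij: "(i, j) \<in> inner_cells n" "(i', j') \<in> inner_cells n"
      "cell_key n (i, j) = cell_key n (i', j')" using P by auto
    show ?thesis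
      using index_act_cell[OF ij(1) y] index_act_cell[OF ij(2) y] ij(3)
      by (simp add: letter_act_def)
  qed
qed

lemma act_P_word:
  "1 \<le> n \<Longrightarrow> x \<in> T \<Longrightarrow> act (wclass (2*n+1) (2*n+1) (pi_n n) [(GA 1, False), (GA 2, True)]) x = p x"
  unfolding act_wclass by (simp add: letter_act_def index_act_def w'_w p_closed)

lemma act_W_word: "1 \<le> n \<Longrightarrow> x \<in> T \<Longrightarrow> act (wclass (2*n+1) (2*n+1) (pi_n n) [(GA 1, True)]) x = w x"
  unfolding act_wclass by (simp add: letter_act_def index_act_def)

end

locale Gamma_n =
  fixes n :: nat
  assumes n_ge_2: "2 \<le> n"
begin

definition G :: "word set monoid" where
  "G = Gamma (2*n+1) (2*n+1) (pi_n n)"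

definition cls :: "word \<Rightarrow> word set" where
  "cls = wclass (2*n+1) (2*n+1) (pi_n n)"

abbreviation valid :: "word \<Rightarrow> bool" where
  "valid \<equiv> valid_word (2*n+1) (2*n+1)"

definition A :: "nat \<Rightarrow> word set" where
  "A j = cls [(GA j, True)]"

sublocale group G unfolding G_def by (rule group_Gamma)

lemma mult_cls: "cls u \<otimes>\<^bsub>G\<^esub> cls v = cls (u @ v)"
  unfolding G_def cls_def by (rule mult_Gamma_wclass)

lemma cls_eq_iff: "cls u = cls v \<longleftrightarrow> weq (2*n+1) (2*n+1) (pi_n n) u v"
  unfolding cls_def by (rule wclass_eq_iff)

lemma carrier_G: "carrier G = {cls u | u. valid u}"
  unfolding G_def cls_def by (rule carrier_Gamma)

lemma one_G: "\<one>\<^bsub>G\<^esub> = cls []"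
  unfolding G_def cls_def by (rule one_Gamma)

lemma cls_carrier: "valid u \<Longrightarrow> cls u \<in> carrier G"
  by (auto simp: carrier_G)

lemma A_carrier: "j \<le> 2*n \<Longrightarrow> A j \<in> carrier G"
  unfolding A_def by (rule cls_carrier) simp

lemma A_0: "A 0 = \<one>\<^bsub>G\<^esub>"
  unfolding A_def one_G cls_eq_iff using weq.rel_a0[of _ _ _ "[]" "[]"] by simp

lemma B_eq_A: assumes "j \<le> 2*n" shows "cls [(GB j, True)] = A j"
proof (cases "j = 0")
  case True
  then show ?thesis unfolding True A_0 one_G cls_eq_iff using weq.rel_b0[of _ _ _ "[]" "[]"] by simp
next
  case False
  then have "{(j, 0), (0, j)} \<in> pi_n n" using assms by (auto simp: pi_n_def)
  then have "weq (2*n+1) (2*n+1) (pi_n n) ([] @ [(GA 0, True), (GB j, True)] @ [])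
    ([] @ [(GA j, True), (GB 0, True)] @ [])" by (rule weq.rel_block) auto
  then have "A 0 \<otimes>\<^bsub>G\<^esub> cls [(GB j, True)] = A j \<otimes>\<^bsub>G\<^esub> cls [(GB 0, True)]"
    by (simp add: A_def mult_cls cls_eq_iff)
  moreover have "cls [(GB 0, True)] = \<one>\<^bsub>G\<^esub>"
    unfolding one_G cls_eq_iff using weq.rel_b0[of _ _ _ "[]" "[]"] by simp
  ultimately show ?thesis using A_carrier assms cls_carrier[of "[(GB j, True)]"] by (simp add: A_0)
qed

lemma A_cell_rel:
  assumes "c \<in> inner_cells n" "d \<in> inner_cells n" "cell_key n c = cell_key n d"
  shows "A (fst c) \<otimes>\<^bsub>G\<^esub> A (snd c) = A (fst d) \<otimes>\<^bsub>G\<^esub> A (snd d)"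
proof (cases "c = d")
  case False
  then have "{c, d} \<in> pi_n n" using assms unfolding pi_n_def by blast
  then have "weq (2*n+1) (2*n+1) (pi_n n) ([] @ [(GA (fst c), True), (GB (snd c), True)] @ [])
    ([] @ [(GA (fst d), True), (GB (snd d), True)] @ [])" by (rule weq.rel_block) auto
  then have "A (fst c) \<otimes>\<^bsub>G\<^esub> cls [(GB (snd c), True)] = A (fst d) \<otimes>\<^bsub>G\<^esub> cls [(GB (snd d), True)]"
    by (simp add: A_def mult_cls cls_eq_iff)
  moreover have "snd c \<le> 2*n" "snd d \<le> 2*n" using assms(1,2) by (auto simp: inner_cells_def)
  ultimately show ?thesis by (simp add: B_eq_A)
qed simp

lemma cls_letter: "valid [(y, True)] \<Longrightarrow> cls [(y, True)] = A (gen_index y)"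
  by (cases y) (simp_all add: A_def B_eq_A)

lemma cls_letter_inv: "valid [(y, True)] \<Longrightarrow> cls [(y, False)] = inv\<^bsub>G\<^esub> cls [(y, True)]"
proof -
  assume v: "valid [(y, True)]"
  have "weq (2*n+1) (2*n+1) (pi_n n) ([] @ [(y, False), (y, \<not> False)] @ []) ([] @ [])"
    using v by (intro weq.cancel) simp
  then have "cls [(y, False)] \<otimes>\<^bsub>G\<^esub> cls [(y, True)] = \<one>\<^bsub>G\<^esub>"
    by (simp add: mult_cls cls_eq_iff one_G)
  moreover have "cls [(y, False)] \<in> carrier G" "cls [(y, True)] \<in> carrier G"
    using v by (auto intro!: cls_carrier)
  ultimately show ?thesis by (simp add: inv_equality)
qed

abbreviation X :: "nat \<Rightarrow> word set" where "X a \<equiv> A (idx a 0)"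
abbreviation Y :: "nat \<Rightarrow> word set" where "Y a \<equiv> A (idx a 1)"

definition P :: "word set" where "P = inv\<^bsub>G\<^esub> (X 0) \<otimes>\<^bsub>G\<^esub> Y 0"
definition W :: "word set" where "W = X 0"

lemma A_idx_carrier: "a < n \<Longrightarrow> b < 2 \<Longrightarrow> A (idx a b) \<in> carrier G"
  by (rule A_carrier) (simp add: idx_def)

lemma P_carrier: "P \<in> carrier G"
  unfolding P_def using n_ge_2 by (intro m_closed inv_closed A_idx_carrier) auto

lemma W_carrier: "W \<in> carrier G"
  unfolding W_def using n_ge_2 by (intro A_idx_carrier) auto

text \<open>The block pairing the cells \<open>(2a+1, 2g+d+1)\<close> and \<open>(2a+2, 2g+d-1)\<close>, indices mod \<open>n\<close>.\<close>
lemma X_Y_rel: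
  assumes "a < n" "g < n" "d < 2"
  shows "X a \<otimes>\<^bsub>G\<^esub> A (idx g d) = Y a \<otimes>\<^bsub>G\<^esub> A (idx ((g + n - 1) mod n) d)"
proof -
  have "cell_key n (idx a 0, idx g d) = cell_key n (idx a 1, idx ((g + n - 1) mod n) d)"
    using assms Suc_pred_mod[OF assms(2)] by (simp add: cell_key_idx)
  from A_cell_rel[OF idx_inner_cells idx_inner_cells this] assms n_ge_2 show ?thesis by simp
qed

lemma Y_eq: assumes "a < n" shows "Y a = X a \<otimes>\<^bsub>G\<^esub> P"
proof -
  have ar: "(0 + n - 1) mod n = n - 1" using n_ge_2 by simp
  have c: "X a \<in> carrier G" "Y a \<in> carrier G" "X 0 \<in> carrier G" "Y 0 \<in> carrier G"
    "A (idx (n - 1) 0) \<in> carrier G"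
    using assms n_ge_2 by (auto intro!: A_idx_carrier)
  have "X a \<otimes>\<^bsub>G\<^esub> X 0 = Y a \<otimes>\<^bsub>G\<^esub> A (idx (n - 1) 0)"
    "X 0 \<otimes>\<^bsub>G\<^esub> X 0 = Y 0 \<otimes>\<^bsub>G\<^esub> A (idx (n - 1) 0)"
    using X_Y_rel[of _ 0 0] assms n_ge_2 ar by simp_all
  then have "inv\<^bsub>G\<^esub> (X a) \<otimes>\<^bsub>G\<^esub> Y a = inv\<^bsub>G\<^esub> (X 0) \<otimes>\<^bsub>G\<^esub> Y 0"
    using c by (metis inv_solve_left' inv_solve_right m_assoc m_closed inv_closed)
  then show ?thesis using c P_carrier unfolding P_def by (simp add: inv_solve_left')
qed

lemma A_shift: assumes "g < n" "d < 2"
  shows "A (idx g d) = P \<otimes>\<^bsub>G\<^esub> A (idx ((g + n - 1) mod n) d)"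
proof -
  have c: "X 0 \<in> carrier G" "Y 0 \<in> carrier G" "A (idx g d) \<in> carrier G"
    "A (idx ((g + n - 1) mod n) d) \<in> carrier G"
    using assms n_ge_2 by (auto intro!: A_idx_carrier)
  have "X 0 \<otimes>\<^bsub>G\<^esub> A (idx g d) = Y 0 \<otimes>\<^bsub>G\<^esub> A (idx ((g + n - 1) mod n) d)"
    using X_Y_rel[of 0 g d] assms n_ge_2 by simp
  then show ?thesis unfolding P_def using c by (simp add: m_assoc inv_solve_left)
qed

lemma A_idx_P_pow: "g < n \<Longrightarrow> d < 2 \<Longrightarrow> A (idx g d) = P [^]\<^bsub>G\<^esub> g \<otimes>\<^bsub>G\<^esub> A (idx 0 d)"
proof (induction g)
  case (Suc g)
  have "A (idx (Suc g) d) = P \<otimes>\<^bsub>G\<^esub> (P [^]\<^bsub>G\<^esub> g \<otimes>\<^bsub>G\<^esub> A (idx 0 d))"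
    using A_shift[OF Suc.prems] Suc by simp
  also have "\<dots> = P [^]\<^bsub>G\<^esub> Suc g \<otimes>\<^bsub>G\<^esub> A (idx 0 d)"
    using P_carrier A_idx_carrier[of 0 d] Suc.prems by (simp only: nat_pow_Suc2 m_assoc nat_pow_closed)
  finally show ?case .
qed (simp add: A_idx_carrier n_ge_2)

lemma P_order: "P [^]\<^bsub>G\<^esub> n = \<one>\<^bsub>G\<^esub>"
proof -
  have c: "A (idx 0 0) \<in> carrier G" using n_ge_2 by (intro A_idx_carrier) auto
  have "A (idx 0 0) = P \<otimes>\<^bsub>G\<^esub> (P [^]\<^bsub>G\<^esub> (n - 1) \<otimes>\<^bsub>G\<^esub> A (idx 0 0))"
    using A_shift[of 0 0] A_idx_P_pow[of "n - 1" 0] n_ge_2 by simp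
  also have "\<dots> = P [^]\<^bsub>G\<^esub> n \<otimes>\<^bsub>G\<^esub> A (idx 0 0)"
    using P_carrier c n_ge_2 nat_pow_Suc2[of P "n - 1"] by (simp add: m_assoc)
  finally show ?thesis using c P_carrier by simp
qed

lemma A_idx: "a < n \<Longrightarrow> b < 2 \<Longrightarrow> A (idx a b) = P [^]\<^bsub>G\<^esub> a \<otimes>\<^bsub>G\<^esub> W \<otimes>\<^bsub>G\<^esub> P [^]\<^bsub>G\<^esub> b"
  using A_idx_P_pow[of a 0] Y_eq[of a] P_carrier W_carrier
  by (cases b) (simp_all add: W_def)

lemma P_cls: "P = cls [(GA 1, False), (GA 2, True)]"
proof -
  have "X 0 = cls [(GA 1, True)]" "Y 0 = cls [(GA 2, True)]"
    by (simp_all add: A_def idx_def numeral_2_eq_2)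
  moreover have "inv\<^bsub>G\<^esub> cls [(GA 1, True)] = cls [(GA 1, False)]"
    using cls_letter_inv[of "GA 1"] n_ge_2 by simp
  ultimately show ?thesis unfolding P_def by (simp add: mult_cls)
qed

lemma W_cls: "W = cls [(GA 1, True)]"
  by (simp add: W_def A_def idx_def)

end

section \<open>Normal forms and faithfulness\<close>

type_synonym nf = "nat \<times> (int \<times> nat) list"

fun nf_tail :: "nat \<Rightarrow> (int \<times> nat) list \<Rightarrow> bool" where
  "nf_tail n [] = True"
| "nf_tail n [(k, i)] = (k \<noteq> 0 \<and> i < n)"
| "nf_tail n ((k, i) # (k', i') # L) = (k \<noteq> 0 \<and> 0 < i \<and> i < n \<and> nf_tail n ((k', i') # L))"

text \<open>\<open>(i\<^sub>0, [(k\<^sub>1, i\<^sub>1), \<dots>, (k\<^sub>r, i\<^sub>r)])\<close> stands for the reduced word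
  \<open>p\<^bsup>i\<^sub>0\<^esup> w\<^bsup>k\<^sub>1\<^esup> p\<^bsup>i\<^sub>1\<^esup> \<cdots> w\<^bsup>k\<^sub>r\<^esup> p\<^bsup>i\<^sub>r\<^esup>\<close> of the free product \<open>C\<^sub>n * \<int>\<close>.\<close>
definition normal_forms :: "nat \<Rightarrow> nf set" where
  "normal_forms n = {(i0, L). i0 < n \<and> nf_tail n L}"

fun nf_p :: "nat \<Rightarrow> nf \<Rightarrow> nf" where
  "nf_p n (i0, L) = (Suc i0 mod n, L)"

fun nf_p' :: "nat \<Rightarrow> nf \<Rightarrow> nf" where
  "nf_p' n (i0, L) = ((i0 + n - 1) mod n, L)"

fun nf_w :: "nf \<Rightarrow> nf" where
  "nf_w (i0, L) = (if i0 \<noteq> 0 then (0, (1, i0) # L) else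
     (case L of [] \<Rightarrow> (0, [(1, 0)])
      | (k, i) # L' \<Rightarrow> if k + 1 = 0 then (i, L') else (0, (k + 1, i) # L')))"

fun nf_w' :: "nf \<Rightarrow> nf" where
  "nf_w' (i0, L) = (if i0 \<noteq> 0 then (0, (-1, i0) # L) else
     (case L of [] \<Rightarrow> (0, [(-1, 0)])
      | (k, i) # L' \<Rightarrow> if k - 1 = 0 then (i, L') else (0, (k - 1, i) # L')))"

lemma nf_tail_Cons:
  "nf_tail n ((k, i) # L) \<longleftrightarrow> k \<noteq> 0 \<and> i < n \<and> nf_tail n L \<and> (L \<noteq> [] \<longrightarrow> 0 < i)"
  by (cases L) auto

lemma nf_p_pow: "i0 < n \<Longrightarrow> (nf_p n ^^ k) (i0, L) = ((i0 + k) mod n, L)"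
  by (induction k) (auto simp: mod_Suc_eq)

lemma free_product_action_normal_forms:
  "free_product_action n (normal_forms n) (nf_p n) (nf_p' n) nf_w nf_w'"
proof
  fix x assume x: "x \<in> normal_forms n"
  obtain i0 L where xe: "x = (i0, L)" "i0 < n" "nf_tail n L"
    using x by (cases x) (auto simp: normal_forms_def)
  show "nf_p n x \<in> normal_forms n" "nf_p' n x \<in> normal_forms n"
    using xe by (auto simp: normal_forms_def)
  show "nf_w x \<in> normal_forms n" "nf_w' x \<in> normal_forms n"
    "nf_w (nf_w' x) = x" "nf_w' (nf_w x) = x"
    using xe by (auto simp: normal_forms_def nf_tail_Cons split: list.splits)
  show "nf_p n (nf_p' n x) = x"
    using xe by (cases i0) (auto simp: mod_Suc_eq)
  show "nf_p' n (nf_p n x) = x"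
    using xe by (cases "Suc i0 = n") (auto simp: mod_add_left_eq[symmetric])
  show "(nf_p n ^^ n) x = x"
    using xe by (simp add: nf_p_pow)
qed

context Gamma_n
begin

sublocale NF: free_product_action n "normal_forms n" "nf_p n" "nf_p' n" nf_w nf_w'
  by (rule free_product_action_normal_forms)

lemma group_action_normal_forms: "group_action G (normal_forms n) NF.act"
  unfolding G_def by (rule NF.group_action_Gamma)

lemma NF_act_cls: "NF.act (cls u) = restrict (word_act NF.letter_act u) (normal_forms n)"
  unfolding cls_def by (rule NF.act_wclass)

primrec nf_elem_tail :: "(int \<times> nat) list \<Rightarrow> word set" where
  "nf_elem_tail [] = \<one>\<^bsub>G\<^esub>"
| "nf_elem_tail (c # L) = W [^]\<^bsub>G\<^esub> fst c \<otimes>\<^bsub>G\<^esub> (P [^]\<^bsub>G\<^esub> snd c \<otimes>\<^bsub>G\<^esub> nf_elem_tail L)"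

definition nf_elem :: "nf \<Rightarrow> word set" where
  "nf_elem x = P [^]\<^bsub>G\<^esub> fst x \<otimes>\<^bsub>G\<^esub> nf_elem_tail (snd x)"

lemma nf_elem_tail_carrier [simp]: "nf_elem_tail L \<in> carrier G"
  by (induction L) (simp_all add: W_carrier P_carrier)

lemma nf_elem_carrier [simp]: "nf_elem x \<in> carrier G"
  by (simp add: nf_elem_def P_carrier)

lemma P_pow_mod: "P [^]\<^bsub>G\<^esub> k = P [^]\<^bsub>G\<^esub> (k mod n)"
proof -
  have "P [^]\<^bsub>G\<^esub> k = P [^]\<^bsub>G\<^esub> (k mod n) \<otimes>\<^bsub>G\<^esub> (P [^]\<^bsub>G\<^esub> n) [^]\<^bsub>G\<^esub> (k div n)"
    using P_carrier by (simp add: nat_pow_pow nat_pow_mult)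
  then show ?thesis using P_carrier by (simp add: P_order)
qed

lemma P_mult_nf_elem: "P \<otimes>\<^bsub>G\<^esub> nf_elem x = nf_elem (nf_p n x)"
proof -
  obtain i0 L where x: "x = (i0, L)" by (cases x)
  have "P \<otimes>\<^bsub>G\<^esub> nf_elem x = P \<otimes>\<^bsub>G\<^esub> P [^]\<^bsub>G\<^esub> i0 \<otimes>\<^bsub>G\<^esub> nf_elem_tail L"
    using P_carrier by (simp add: x nf_elem_def m_assoc)
  also have "\<dots> = P [^]\<^bsub>G\<^esub> Suc i0 \<otimes>\<^bsub>G\<^esub> nf_elem_tail L"
    by (simp only: nat_pow_Suc2[OF P_carrier])
  finally show ?thesis
    by (simp only: x nf_elem_def nf_p.simps fst_conv snd_conv P_pow_mod[of "Suc i0"])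
qed

lemma W_mult_nf_elem: assumes "x \<in> normal_forms n" shows "W \<otimes>\<^bsub>G\<^esub> nf_elem x = nf_elem (nf_w x)"
proof -
  obtain i0 L where x: "x = (i0, L)" by (cases x)
  have W_int_pow: "W \<otimes>\<^bsub>G\<^esub> (W [^]\<^bsub>G\<^esub> (k::int) \<otimes>\<^bsub>G\<^esub> z) = W [^]\<^bsub>G\<^esub> (k + 1) \<otimes>\<^bsub>G\<^esub> z"
    if "z \<in> carrier G" for k z
    using W_carrier that by (simp add: int_pow_mult m_assoc add.commute)
  consider "i0 \<noteq> 0" | "i0 = 0" "L = []" | k i L' where "i0 = 0" "L = (k, i) # L'"
    by (cases L) auto
  then show ?thesis
  proof cases
    case 3
    have "W \<otimes>\<^bsub>G\<^esub> nf_elem x = W [^]\<^bsub>G\<^esub> (k + 1) \<otimes>\<^bsub>G\<^esub> (P [^]\<^bsub>G\<^esub> i \<otimes>\<^bsub>G\<^esub> nf_elem_tail L')"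
      using 3 P_carrier W_carrier by (simp add: x nf_elem_def W_int_pow)
    then show ?thesis using 3 P_carrier W_carrier by (auto simp: x nf_elem_def)
  qed (use W_carrier P_carrier in \<open>simp_all add: x nf_elem_def m_assoc\<close>)
qed

lemma P_pow_mult_nf_elem: "P [^]\<^bsub>G\<^esub> k \<otimes>\<^bsub>G\<^esub> nf_elem x = nf_elem ((nf_p n ^^ k) x)"
proof (induction k)
  case (Suc k)
  have "P [^]\<^bsub>G\<^esub> Suc k \<otimes>\<^bsub>G\<^esub> nf_elem x = P \<otimes>\<^bsub>G\<^esub> (P [^]\<^bsub>G\<^esub> k \<otimes>\<^bsub>G\<^esub> nf_elem x)"
    using P_carrier by (simp only: nat_pow_Suc2 m_assoc nat_pow_closed nf_elem_carrier)
  then show ?case by (simp add: Suc P_mult_nf_elem)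
qed simp

lemma A_mult_nf_elem:
  assumes "j \<le> 2*n" "x \<in> normal_forms n"
  shows "A j \<otimes>\<^bsub>G\<^esub> nf_elem x = nf_elem (NF.index_act j True x)"
proof (cases "j = 0")
  case True
  then show ?thesis by (simp add: A_0 NF.index_act_def)
next
  case False
  define a b where "a = (j - 1) div 2" and "b = (j - 1) mod 2"
  have j: "j = idx a b" "a < n" "b < 2" using False assms(1) by (auto simp: a_def b_def idx_def)
  have "A j \<otimes>\<^bsub>G\<^esub> nf_elem x = P [^]\<^bsub>G\<^esub> a \<otimes>\<^bsub>G\<^esub> (W \<otimes>\<^bsub>G\<^esub> (P [^]\<^bsub>G\<^esub> b \<otimes>\<^bsub>G\<^esub> nf_elem x))"
    using A_idx[OF j(2,3)] j(1) P_carrier W_carrier by (simp add: m_assoc)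
  also have "\<dots> = nf_elem ((nf_p n ^^ a) (nf_w ((nf_p n ^^ b) x)))"
    using assms(2) by (simp add: P_pow_mult_nf_elem W_mult_nf_elem NF.p_pow_closed)
  finally show ?thesis using False assms(1) by (simp add: NF.index_act_def a_def b_def)
qed

lemma letter_mult_nf_elem:
  assumes "valid [l]" "x \<in> normal_forms n"
  shows "cls [l] \<otimes>\<^bsub>G\<^esub> nf_elem x = nf_elem (NF.letter_act l x)"
proof -
  obtain y e where l: "l = (y, e)" by (cases l)
  have v: "valid [(y, True)]" and j: "gen_index y \<le> 2*n"
    using assms(1) l by (cases y; simp)+
  have pos: "cls [(y, True)] \<otimes>\<^bsub>G\<^esub> nf_elem z = nf_elem (NF.letter_act (y, True) z)"
    if "z \<in> normal_forms n" for z
    using A_mult_nf_elem[OF j that] by (simp add: cls_letter[OF v] NF.letter_act_def)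
  show ?thesis
  proof (cases e)
    case False
    let ?z = "NF.letter_act (y, False) x"
    have "cls [(y, True)] \<otimes>\<^bsub>G\<^esub> nf_elem ?z = nf_elem x"
      using pos[OF NF.closed[OF assms(2)]] NF.inverse[OF assms(2), of y True] by simp
    then have "nf_elem ?z = inv\<^bsub>G\<^esub> cls [(y, True)] \<otimes>\<^bsub>G\<^esub> nf_elem x"
      using cls_carrier[OF v] by (simp add: inv_solve_left)
    then show ?thesis using l False cls_letter_inv[OF v] by simp
  qed (use pos[OF assms(2)] l in simp)
qed

lemma cls_mult_nf_elem:
  "valid u \<Longrightarrow> x \<in> normal_forms n \<Longrightarrow> cls u \<otimes>\<^bsub>G\<^esub> nf_elem x = nf_elem (word_act NF.letter_act u x)"
proof (induction u)
  case (Cons l u)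
  have v: "valid [l]" "valid u" using Cons.prems by (cases l; simp)+
  have "cls (l # u) = cls [l] \<otimes>\<^bsub>G\<^esub> cls u" by (simp add: mult_cls)
  then have "cls (l # u) \<otimes>\<^bsub>G\<^esub> nf_elem x = cls [l] \<otimes>\<^bsub>G\<^esub> (cls u \<otimes>\<^bsub>G\<^esub> nf_elem x)"
    using v by (simp add: m_assoc cls_carrier)
  then show ?case
    using Cons letter_mult_nf_elem[OF _ NF.word_act_closed] by simp
qed (simp add: one_G[symmetric])

lemma empty_nf: "(0, []) \<in> normal_forms n"
  using n_ge_2 by (simp add: normal_forms_def)

lemma nf_elem_orbit: assumes "Z \<in> carrier G" shows "nf_elem (NF.act Z (0, [])) = Z"
proof -
  obtain u where u: "valid u" "Z = cls u" using assms by (auto simp: carrier_G)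
  have "nf_elem (0, []) = \<one>\<^bsub>G\<^esub>" by (simp add: nf_elem_def)
  then have "cls u = nf_elem (word_act NF.letter_act u (0, []))"
    using cls_mult_nf_elem[OF u(1) empty_nf] cls_carrier[OF u(1)] by simp
  moreover have "NF.act Z (0, []) = word_act NF.letter_act u (0, [])"
    by (simp add: u(2) NF_act_cls empty_nf)
  ultimately show ?thesis by (simp add: u(2))
qed

lemma NF_act_P: "x \<in> normal_forms n \<Longrightarrow> NF.act P x = nf_p n x"
  unfolding P_cls cls_def using n_ge_2 by (intro NF.act_P_word) auto

lemma NF_act_W: "x \<in> normal_forms n \<Longrightarrow> NF.act W x = nf_w x"
  unfolding W_cls cls_def using n_ge_2 by (intro NF.act_W_word) auto

lemma NF_act_inv_P: assumes "x \<in> normal_forms n" shows "NF.act (inv\<^bsub>G\<^esub> P) x = nf_p' n x"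
proof -
  interpret NF_action: group_action G "normal_forms n" NF.act by (rule group_action_normal_forms)
  have "NF.act (inv\<^bsub>G\<^esub> P) (NF.act P (nf_p' n x)) = nf_p' n x"
    using assms P_carrier NF.p'_closed by (intro NF_action.act_inv_cancel) auto
  then show ?thesis using assms by (simp add: NF_act_P NF.p'_closed NF.p_p')
qed

end

section \<open>Non-amenability and nondegeneracy\<close>

definition nf_starting :: "nat \<Rightarrow> nat \<Rightarrow> bool \<Rightarrow> nf set" where
  "nf_starting n i pos =
     {x \<in> normal_forms n. fst x = i \<and> snd x \<noteq> [] \<and> (0 < fst (hd (snd x)) \<longleftrightarrow> pos)}"

lemma nf_w_ping:
  assumes "x \<in> normal_forms n" "x \<notin> nf_starting n 0 False"
  shows "nf_w x \<in> nf_starting n 0 True"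
proof -
  obtain i0 L where x: "x = (i0, L)" "i0 < n" "nf_tail n L"
    using assms(1) by (cases x) (auto simp: normal_forms_def)
  have "nf_w x \<in> normal_forms n"
    using free_product_action.w_closed[OF free_product_action_normal_forms assms(1)] .
  moreover have "fst (nf_w x) = 0 \<and> snd (nf_w x) \<noteq> [] \<and> 0 < fst (hd (snd (nf_w x)))"
  proof (cases "i0 = 0 \<and> L \<noteq> []")
    case True
    then obtain k i L' where L: "L = (k, i) # L'" by (cases L) auto
    then have "0 < k" using True x assms(2) by (auto simp: nf_starting_def normal_forms_def nf_tail_Cons)
    then show ?thesis using True x L by simp
  qed (use x in auto)
  ultimately show ?thesis by (simp add: nf_starting_def)
qed

lemma conjugate_ping:
  assumes "2 \<le> n" "x \<in> normal_forms n" "x \<notin> nf_starting n 1 False"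
  shows "nf_p n (nf_w (nf_p' n x)) \<in> nf_starting n 1 True"
proof -
  interpret NF: free_product_action n "normal_forms n" "nf_p n" "nf_p' n" nf_w nf_w'
    by (rule free_product_action_normal_forms)
  obtain i0 L where x: "x = (i0, L)" "i0 < n" using assms(2) by (cases x) (auto simp: normal_forms_def)
  have "nf_p' n x \<notin> nf_starting n 0 False"
  proof (cases "i0 = 1")
    case True
    then show ?thesis using assms x by (auto simp: nf_starting_def)
  next
    case False
    have "(i0 + n - 1) mod n \<noteq> 0"
    proof (cases "i0 = 0")
      case False
      then have "(i0 + n - 1) mod n = i0 - 1" using x(2) by (simp add: mod_if)
      then show ?thesis using False \<open>i0 \<noteq> 1\<close> by simp
    qed (use assms(1) in simp)
    then show ?thesis using x by (simp add: nf_starting_def)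
  qed
  then have "nf_w (nf_p' n x) \<in> nf_starting n 0 True"
    using assms(2) NF.p'_closed by (intro nf_w_ping) auto
  then obtain L where L: "nf_w (nf_p' n x) = (0, L)" "(0, L) \<in> normal_forms n" "L \<noteq> []"
    "0 < fst (hd L)" by (cases "nf_w (nf_p' n x)") (auto simp: nf_starting_def)
  moreover have "nf_p n (0, L) = (1, L)" using assms(1) by simp
  ultimately show ?thesis using NF.p_closed[OF L(2)] by (simp add: nf_starting_def)
qed

context Gamma_n
begin

lemma not_amenable_G: "\<not> amenable G"
proof -
  interpret NF_action: group_action G "normal_forms n" NF.act by (rule group_action_normal_forms)
  let ?t = "P \<otimes>\<^bsub>G\<^esub> W \<otimes>\<^bsub>G\<^esub> inv\<^bsub>G\<^esub> P"
  have t: "?t \<in> carrier G" using P_carrier W_carrier by simp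
  have t_act: "NF.act ?t x = nf_p n (nf_w (nf_p' n x))" if "x \<in> normal_forms n" for x
    using that P_carrier W_carrier
    by (simp add: NF_action.composition_rule NF_act_inv_P NF_act_W NF_act_P NF.p'_closed NF.w_closed)
  have "NF.act W ` (normal_forms n - nf_starting n 0 False) \<subseteq> nf_starting n 0 True"
    using nf_w_ping by (auto simp: NF_act_W)
  moreover have "NF.act ?t ` (normal_forms n - nf_starting n 1 False) \<subseteq> nf_starting n 1 True"
    using conjugate_ping[OF n_ge_2] by (auto simp: t_act)
  moreover have "nf_starting n 0 True \<inter> nf_starting n 0 False = {}"
    "nf_starting n 1 True \<inter> nf_starting n 1 False = {}"
    "(nf_starting n 0 True \<union> nf_starting n 0 False) \<inter> (nf_starting n 1 True \<union> nf_starting n 1 False) = {}"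
    "nf_starting n 0 True \<union> nf_starting n 0 False \<union> nf_starting n 1 True \<union> nf_starting n 1 False
       \<subseteq> normal_forms n"
    by (auto simp: nf_starting_def)
  ultimately show ?thesis
    by (intro NF_action.not_amenable_if_ping_pong[OF empty_nf W_carrier t])
qed

lemma A_orbit:
  assumes "j \<le> 2*n"
  shows "NF.act (A j) (0, []) = (if j = 0 then (0, []) else ((j - 1) div 2, [(1, (j - 1) mod 2)]))"
proof -
  have "NF.act (A j) (0, []) = NF.index_act j True (0, [])"
    by (simp add: A_def NF_act_cls empty_nf NF.letter_act_def)
  moreover have "(nf_p n ^^ k) (0, L) = (k, L)" if "k < n" for k L
    using that n_ge_2 by (simp add: nf_p_pow)
  moreover have "(j - 1) mod 2 < n" "(j - 1) div 2 < n" using assms n_ge_2 by auto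
  ultimately show ?thesis using assms by (simp add: NF.index_act_def)
qed

lemma inj_on_A: "inj_on A {..2*n}"
proof
  fix i j assume ij: "i \<in> {..2*n}" "j \<in> {..2*n}" "A i = A j"
  then have "NF.act (A i) (0, []) = NF.act (A j) (0, [])" by simp
  then have key: "(if i = 0 then (0, []) else ((i - 1) div 2, [(1::int, (i - 1) mod 2)]))
    = (if j = 0 then (0, []) else ((j - 1) div 2, [(1, (j - 1) mod 2)]))"
    using ij A_orbit[of i] A_orbit[of j] by simp
  show "i = j"
  proof (cases "i = 0 \<or> j = 0")
    case False
    then have "(i - 1) div 2 = (j - 1) div 2" "(i - 1) mod 2 = (j - 1) mod 2" using key by auto
    then have "i - 1 = j - 1" by (metis div_mult_mod_eq)
    then show ?thesis using False by linarith
  qed (use key in \<open>auto split: if_splits\<close>)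
qed

lemma nondegenerate_pi_n: "nondegenerate (2*n+1) (2*n+1) (pi_n n)"
proof -
  have "gen_a (2*n+1) (2*n+1) (pi_n n) j = A j" "gen_b (2*n+1) (2*n+1) (pi_n n) j = A j"
    if "j < 2*n+1" for j
    using that B_eq_A[of j] by (simp_all add: gen_a_def gen_b_def A_def cls_def)
  then show ?thesis using inj_on_A unfolding nondegenerate_def inj_on_def by auto
qed

end

section \<open>Residual finiteness\<close>

lemma funpow_cong_on:
  assumes "\<And>y. y \<in> S \<Longrightarrow> f y = g y" "\<And>y. y \<in> S \<Longrightarrow> g y \<in> S" "z \<in> S"
  shows "(f ^^ m) z = (g ^^ m) z"
proof -
  have "(f ^^ m) z = (g ^^ m) z \<and> (g ^^ m) z \<in> S"
    by (induction m) (simp_all add: assms)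
  then show ?thesis ..
qed

lemma extend_inj_on_to_perm:
  assumes "finite Y" "inj_on f D" "D \<subseteq> Y" "f ` D \<subseteq> Y"
  shows "\<exists>g. bij_betw g Y Y \<and> (\<forall>x\<in>D. g x = f x)"
proof -
  have "card (Y - D) = card (Y - f ` D)"
    using assms by (simp add: card_Diff_subset finite_subset card_image)
  then obtain h where h: "bij_betw h (Y - D) (Y - f ` D)"
    using finite_same_card_bij assms(1) by (meson finite_Diff)
  define g where "g x = (if x \<in> D then f x else h x)" for x
  have "bij_betw g D (f ` D)"
    using assms(2) unfolding bij_betw_def g_def inj_on_def by auto
  moreover have "bij_betw g (Y - D) (Y - f ` D)"
    using h by (rule bij_betw_cong[THEN iffD1, rotated]) (auto simp: g_def)
  ultimately have "bij_betw g (D \<union> (Y - D)) (f ` D \<union> (Y - f ` D))"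
    by (rule bij_betw_combine) blast
  moreover have "D \<union> (Y - D) = Y" "f ` D \<union> (Y - f ` D) = Y" using assms(3,4) by auto
  ultimately show ?thesis by (auto simp: g_def)
qed

definition nf_weight :: "nf \<Rightarrow> nat" where
  "nf_weight x = (\<Sum>c\<leftarrow>snd x. nat \<bar>fst c\<bar>)"

definition nf_ball :: "nat \<Rightarrow> nat \<Rightarrow> nf set" where
  "nf_ball n K = {x \<in> normal_forms n. nf_weight x \<le> K}"

lemma finite_nf_ball: "finite (nf_ball n K)"
proof -
  have bound: "length L \<le> (\<Sum>c\<leftarrow>L. nat \<bar>fst c\<bar>) \<and> (\<forall>c\<in>set L. nat \<bar>fst c\<bar> \<le> (\<Sum>c\<leftarrow>L. nat \<bar>fst c\<bar>) \<and> snd c < n)"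
    if "nf_tail n L" for L
    using that by (induction L) (fastforce simp: nf_tail_Cons)+
  have "nf_ball n K \<subseteq> {..<n} \<times> {L. set L \<subseteq> {- int K .. int K} \<times> {..<n} \<and> length L \<le> K}"
  proof
    fix x assume x: "x \<in> nf_ball n K"
    then have "fst x < n" "nf_tail n (snd x)" "(\<Sum>c\<leftarrow>snd x. nat \<bar>fst c\<bar>) \<le> K"
      by (auto simp: nf_ball_def normal_forms_def nf_weight_def)
    then show "x \<in> {..<n} \<times> {L. set L \<subseteq> {- int K .. int K} \<times> {..<n} \<and> length L \<le> K}"
      using bound[of "snd x"] by (cases x) fastforce
  qed
  moreover have "finite ({..<n} \<times> {L. set L \<subseteq> {- int K .. int K} \<times> {..<n} \<and> length L \<le> K})"
    by (intro finite_cartesian_product finite_lists_length_le) auto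
  ultimately show ?thesis by (rule finite_subset)
qed

text \<open>The normal form of \<open>w\<^sup>k r\<close> when \<open>r\<close> does not start with a power of \<open>w\<close>.\<close>
definition nf_cons :: "int \<Rightarrow> nf \<Rightarrow> nf" where
  "nf_cons k r = (if k = 0 then r else (0, (k, fst r) # snd r))"

definition w_free :: "nat \<Rightarrow> nf \<Rightarrow> bool" where
  "w_free n r \<longleftrightarrow> r \<in> normal_forms n \<and> (fst r \<noteq> 0 \<or> snd r = [])"

lemma nf_w_nf_cons: "w_free n r \<Longrightarrow> nf_w (nf_cons k r) = nf_cons (k + 1) r"
  by (cases r) (auto simp: nf_cons_def w_free_def)

lemma nf_cons_in_ball: "w_free n r \<Longrightarrow> nat \<bar>k\<bar> + nf_weight r \<le> K \<Longrightarrow> nf_cons k r \<in> nf_ball n K"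
  by (cases r) (auto simp: nf_cons_def w_free_def nf_ball_def normal_forms_def nf_weight_def nf_tail_Cons)

lemma nf_p_ball: "x \<in> nf_ball n K \<Longrightarrow> nf_p n x \<in> nf_ball n K"
  and nf_p'_ball: "x \<in> nf_ball n K \<Longrightarrow> nf_p' n x \<in> nf_ball n K"
  using free_product_action.p_closed[OF free_product_action_normal_forms]
    free_product_action.p'_closed[OF free_product_action_normal_forms]
  by (cases x; auto simp: nf_ball_def nf_weight_def)+

lemma nf_w_extends_to_perm:
  "\<exists>g. bij_betw g (nf_ball n K) (nf_ball n K) \<and> (\<forall>x\<in>nf_ball n K. nf_w x \<in> nf_ball n K \<longrightarrow> g x = nf_w x)"
proof -
  define D where "D = {x \<in> nf_ball n K. nf_w x \<in> nf_ball n K}"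
  interpret NF: free_product_action n "normal_forms n" "nf_p n" "nf_p' n" nf_w nf_w'
    by (rule free_product_action_normal_forms)
  have "inj_on nf_w (normal_forms n)" by (rule inj_on_inverseI[where g = nf_w']) (rule NF.w'_w)
  then have "inj_on nf_w D" by (rule inj_on_subset) (auto simp: D_def nf_ball_def)
  moreover have "D \<subseteq> nf_ball n K" "nf_w ` D \<subseteq> nf_ball n K" by (auto simp: D_def)
  ultimately obtain g where "bij_betw g (nf_ball n K) (nf_ball n K)" "\<forall>x\<in>D. g x = nf_w x"
    using extend_inj_on_to_perm[OF finite_nf_ball] by blast
  then show ?thesis by (intro exI[of _ g]) (auto simp: D_def)
qed

locale Gamma_n_truncation = Gamma_n +
  fixes K :: nat and g :: "nf \<Rightarrow> nf"
  assumes g_bij: "bij_betw g (nf_ball n K) (nf_ball n K)"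
    and g_extends_nf_w: "x \<in> nf_ball n K \<Longrightarrow> nf_w x \<in> nf_ball n K \<Longrightarrow> g x = nf_w x"
begin

sublocale Trunc: free_product_action n "nf_ball n K" "nf_p n" "nf_p' n" g "inv_into (nf_ball n K) g"
proof
  fix x assume x: "x \<in> nf_ball n K"
  then have x': "x \<in> normal_forms n" by (simp add: nf_ball_def)
  show "nf_p n x \<in> nf_ball n K" "nf_p' n x \<in> nf_ball n K" using x by (simp_all add: nf_p_ball nf_p'_ball)
  show "g x \<in> nf_ball n K" "inv_into (nf_ball n K) g x \<in> nf_ball n K"
    "g (inv_into (nf_ball n K) g x) = x" "inv_into (nf_ball n K) g (g x) = x"
    using g_bij x bij_betwE[OF g_bij] bij_betwE[OF bij_betw_inv_into[OF g_bij]]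
    by (auto simp: bij_betw_inv_into_left bij_betw_inv_into_right)
  show "nf_p n (nf_p' n x) = x" "nf_p' n (nf_p n x) = x" "(nf_p n ^^ n) x = x"
    using x' by (simp_all add: NF.p_p' NF.p'_p NF.p_order)
qed

lemma group_action_ball: "group_action G (nf_ball n K) Trunc.act"
  unfolding G_def by (rule Trunc.group_action_Gamma)

lemma empty_nf_ball: "(0, []) \<in> nf_ball n K"
  using empty_nf by (simp add: nf_ball_def nf_weight_def)

lemma Trunc_act_P_pow: "y \<in> nf_ball n K \<Longrightarrow> Trunc.act (P [^]\<^bsub>G\<^esub> k) y = (nf_p n ^^ k) y"
proof -
  interpret Trunc_action: group_action G "nf_ball n K" Trunc.act by (rule group_action_ball)
  assume y: "y \<in> nf_ball n K"
  have "Trunc.act P z = nf_p n z" if "z \<in> nf_ball n K" for z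
    unfolding P_cls cls_def using n_ge_2 that by (intro Trunc.act_P_word) auto
  then have "(Trunc.act P ^^ k) y = (nf_p n ^^ k) y"
    using funpow_cong_on[of "nf_ball n K" "Trunc.act P" "nf_p n"] y Trunc.p_closed by blast
  then show ?thesis using y P_carrier by (simp add: Trunc_action.act_nat_pow)
qed

lemma g_pow_nf_cons:
  assumes "w_free n r" "nat \<bar>a\<bar> + nf_weight r \<le> K" "nat \<bar>a + int j\<bar> + nf_weight r \<le> K"
  shows "(g ^^ j) (nf_cons a r) = nf_cons (a + int j) r"
  using assms(3)
proof (induction j)
  case (Suc j)
  have "nat \<bar>a + int j\<bar> + nf_weight r \<le> K" using Suc.prems assms(2) by linarith
  then have "(g ^^ Suc j) (nf_cons a r) = g (nf_cons (a + int j) r)" using Suc.IH by simp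
  also have "\<dots> = nf_w (nf_cons (a + int j) r)"
  proof (rule g_extends_nf_w)
    show "nf_cons (a + int j) r \<in> nf_ball n K"
      using nf_cons_in_ball[OF assms(1)] \<open>nat \<bar>a + int j\<bar> + nf_weight r \<le> K\<close> .
    show "nf_w (nf_cons (a + int j) r) \<in> nf_ball n K"
      using nf_w_nf_cons[OF assms(1)] nf_cons_in_ball[OF assms(1)] Suc.prems by (simp add: add.assoc)
  qed
  also have "\<dots> = nf_cons (a + int j + 1) r" by (rule nf_w_nf_cons[OF assms(1)])
  also have "a + int j + 1 = a + int (Suc j)" by simp
  finally show ?case .
qed simp

lemma Trunc_act_W_pow:
  assumes "w_free n r" "nat \<bar>k\<bar> + nf_weight r \<le> K"
  shows "Trunc.act (W [^]\<^bsub>G\<^esub> k) r = nf_cons k r"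
proof -
  interpret Trunc_action: group_action G "nf_ball n K" Trunc.act by (rule group_action_ball)
  have W_act: "Trunc.act W z = g z" if "z \<in> nf_ball n K" for z
    unfolding W_cls cls_def using n_ge_2 that by (intro Trunc.act_W_word) auto
  have W_pow_act: "Trunc.act (W [^]\<^bsub>G\<^esub> m) z = (g ^^ m) z" if "z \<in> nf_ball n K" for z and m :: nat
  proof -
    have "(Trunc.act W ^^ m) z = (g ^^ m) z"
      using funpow_cong_on[of "nf_ball n K" "Trunc.act W" g] that W_act Trunc.w_closed by blast
    then show ?thesis using that W_carrier by (simp add: Trunc_action.act_nat_pow)
  qed
  have r: "r \<in> nf_ball n K" using nf_cons_in_ball[OF assms(1), of 0] assms(2) by (simp add: nf_cons_def)
  show ?thesis
  proof (cases "0 \<le> k")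
    case True
    then have "Trunc.act (W [^]\<^bsub>G\<^esub> k) r = (g ^^ nat k) (nf_cons 0 r)"
      using W_pow_act[OF r, of "nat k"] by (simp add: int_pow_int[symmetric] nf_cons_def)
    also have "\<dots> = nf_cons k r" using g_pow_nf_cons[OF assms(1)] assms(2) True by simp
    finally show ?thesis .
  next
    case False
    let ?y = "nf_cons k r"
    have y: "?y \<in> nf_ball n K" by (rule nf_cons_in_ball[OF assms])
    have "Trunc.act (W [^]\<^bsub>G\<^esub> nat (- k)) ?y = (g ^^ nat (- k)) ?y" by (rule W_pow_act[OF y])
    also have "\<dots> = nf_cons (k + int (nat (- k))) r"
      by (rule g_pow_nf_cons[OF assms]) (use False assms(2) in simp)
    also have "k + int (nat (- k)) = 0" using False by simp
    finally have "Trunc.act (W [^]\<^bsub>G\<^esub> nat (- k)) ?y = r" by (simp add: nf_cons_def)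
    moreover have "W [^]\<^bsub>G\<^esub> k = inv\<^bsub>G\<^esub> (W [^]\<^bsub>G\<^esub> nat (- k))"
      using W_carrier False int_pow_neg_int[of W "nat (- k)"] by simp
    ultimately show ?thesis
      using Trunc_action.act_inv_cancel[OF _ y, of "W [^]\<^bsub>G\<^esub> nat (- k)"] W_carrier by simp
  qed
qed

lemma Trunc_act_nf_elem_tail:
  "nf_tail n L \<Longrightarrow> nf_weight (0, L) \<le> K \<Longrightarrow> Trunc.act (nf_elem_tail L) (0, []) = (0, L)"
proof (induction L)
  case Nil
  interpret Trunc_action: group_action G "nf_ball n K" Trunc.act by (rule group_action_ball)
  show ?case using empty_nf_ball by (simp add: Trunc_action.act_one)
next
  case (Cons c L)
  interpret Trunc_action: group_action G "nf_ball n K" Trunc.act by (rule group_action_ball)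
  obtain k i where c: "c = (k, i)" by (cases c)
  have tail: "k \<noteq> 0" "i < n" "nf_tail n L" "L \<noteq> [] \<longrightarrow> 0 < i"
    using Cons.prems(1) by (auto simp: c nf_tail_Cons)
  have weight: "nf_weight (i, L) = nf_weight (0, L)" "nf_weight (0, (k, i) # L) = nat \<bar>k\<bar> + nf_weight (0, L)"
    by (simp_all add: nf_weight_def)
  have L_ball: "(0, L) \<in> nf_ball n K"
    using Cons.prems(2) tail n_ge_2 by (simp add: c weight nf_ball_def normal_forms_def)
  have "Trunc.act (nf_elem_tail (c # L)) (0, [])
    = Trunc.act (W [^]\<^bsub>G\<^esub> k) (Trunc.act (P [^]\<^bsub>G\<^esub> i) (Trunc.act (nf_elem_tail L) (0, [])))"
    using Trunc_action.composition_rule[OF empty_nf_ball, of "W [^]\<^bsub>G\<^esub> k" "P [^]\<^bsub>G\<^esub> i \<otimes>\<^bsub>G\<^esub> nf_elem_tail L"]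
      Trunc_action.composition_rule[OF empty_nf_ball, of "P [^]\<^bsub>G\<^esub> i" "nf_elem_tail L"] W_carrier P_carrier
    by (simp add: c)
  also have "\<dots> = Trunc.act (W [^]\<^bsub>G\<^esub> k) (i, L)"
    using Cons.IH tail(3) Cons.prems(2) L_ball tail(2) by (simp add: c weight Trunc_act_P_pow nf_p_pow)
  also have "\<dots> = nf_cons k (i, L)"
    using tail Cons.prems(2) by (intro Trunc_act_W_pow) (auto simp: w_free_def normal_forms_def c weight)
  finally show ?case using tail(1) by (simp add: c nf_cons_def)
qed

lemma Trunc_act_nf_elem:
  assumes "x \<in> normal_forms n" "nf_weight x \<le> K"
  shows "Trunc.act (nf_elem x) (0, []) = x"
proof -
  interpret Trunc_action: group_action G "nf_ball n K" Trunc.act by (rule group_action_ball)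
  obtain i L where x: "x = (i, L)" "i < n" "nf_tail n L"
    using assms(1) by (cases x) (auto simp: normal_forms_def)
  have w: "nf_weight (0, L) \<le> K" using assms(2) x by (simp add: nf_weight_def)
  then have "(0, L) \<in> nf_ball n K" using x n_ge_2 by (simp add: nf_ball_def normal_forms_def)
  then show ?thesis
    using Trunc_act_nf_elem_tail[OF x(3) w] P_carrier empty_nf_ball x(2) n_ge_2
      Trunc_action.composition_rule[OF empty_nf_ball, of "P [^]\<^bsub>G\<^esub> i" "nf_elem_tail L"]
    by (simp add: x nf_elem_def Trunc_act_P_pow nf_p_pow)
qed

lemma Trunc_act_nontrivial:
  assumes "Z \<in> carrier G" "Z \<noteq> \<one>\<^bsub>G\<^esub>" "nf_weight (NF.act Z (0, [])) \<le> K"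
  shows "Trunc.act Z \<noteq> Trunc.act \<one>\<^bsub>G\<^esub>"
proof -
  interpret Trunc_action: group_action G "nf_ball n K" Trunc.act by (rule group_action_ball)
  interpret NF_action: group_action G "normal_forms n" NF.act by (rule group_action_normal_forms)
  let ?x = "NF.act Z (0, [])"
  have x: "?x \<in> normal_forms n" using assms(1) empty_nf by (rule NF_action.element_image) simp
  have Z: "nf_elem ?x = Z" by (rule nf_elem_orbit[OF assms(1)])
  then have "Trunc.act Z (0, []) = ?x" using Trunc_act_nf_elem[OF x assms(3)] by simp
  moreover have "?x \<noteq> (0, [])"
  proof
    assume "?x = (0, [])"
    then have "Z = nf_elem (0, [])" using Z by simp
    then show False using assms(2) by (simp add: nf_elem_def)
  qed
  ultimately show ?thesis using Trunc_action.act_one[OF empty_nf_ball] by metis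
qed

end

context Gamma_n
begin

lemma finite_quotient_separating:
  assumes "finite F" "F \<subseteq> carrier G"
  shows "\<exists>(H :: (nf \<Rightarrow> nf) monoid) h. group H \<and> finite (carrier H) \<and> h \<in> hom G H \<and>
    (\<forall>Z\<in>F. Z \<noteq> \<one>\<^bsub>G\<^esub> \<longrightarrow> h Z \<noteq> \<one>\<^bsub>H\<^esub>)"
proof -
  define K where "K = (\<Sum>Z\<in>F. nf_weight (NF.act Z (0, [])))"
  have K: "nf_weight (NF.act Z (0, [])) \<le> K" if "Z \<in> F" for Z
    unfolding K_def using assms(1) that by (intro member_le_sum) auto
  obtain g where g: "bij_betw g (nf_ball n K) (nf_ball n K)"
    "\<forall>x\<in>nf_ball n K. nf_w x \<in> nf_ball n K \<longrightarrow> g x = nf_w x"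
    using nf_w_extends_to_perm by blast
  interpret T: Gamma_n_truncation n K g
    by unfold_locales (use g in simp_all)
  interpret Trunc_action: group_action G "nf_ball n K" T.Trunc.act by (rule T.group_action_ball)
  have "T.Trunc.act \<in> hom G (BijGroup (nf_ball n K))"
    by (rule group_hom.homh[OF Trunc_action.group_hom])
  moreover have "\<forall>Z\<in>F. Z \<noteq> \<one>\<^bsub>G\<^esub> \<longrightarrow> T.Trunc.act Z \<noteq> \<one>\<^bsub>BijGroup (nf_ball n K)\<^esub>"
    using T.Trunc_act_nontrivial assms K Trunc_action.id_eq_one by (auto simp: BijGroup_def)
  ultimately show ?thesis
    by (intro exI[of _ "BijGroup (nf_ball n K)"] exI[of _ T.Trunc.act] conjI group_BijGroup
        finite_carrier_BijGroup[OF finite_nf_ball])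
qed

lemma sofic_G: "sofic G"
  by (rule sofic_if_residually_finite) (rule finite_quotient_separating)

end

theorem mainTheorem9:
  fixes n :: nat
  assumes "n \<ge> 3"
  shows "\<exists>\<pi> :: (nat \<times> nat) set set.
     is_partition \<pi> ({0..2*n} \<times> {0..2*n}) \<and>
     {(0, 0)} \<in> \<pi> \<and>
     (\<forall>P \<in> \<pi>. P \<noteq> {(0, 0)} \<longrightarrow> card P = 2) \<and>
     nondegenerate (2*n+1) (2*n+1) \<pi> \<and>
     \<not> amenable (Gamma (2*n+1) (2*n+1) \<pi>) \<and>
     sofic (Gamma (2*n+1) (2*n+1) \<pi>)"
proof -
  have n: "2 \<le> n" using assms by simp
  interpret Gamma_n n by unfold_locales (rule n)
  show ?thesis
  proof (intro exI conjI)
    show "is_partition (pi_n n) ({0..2*n} \<times> {0..2*n})" by (rule is_partition_pi_n)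
    show "{(0, 0)} \<in> pi_n n" by (simp add: pi_n_def)
    show "\<forall>P \<in> pi_n n. P \<noteq> {(0, 0)} \<longrightarrow> card P = 2" using card_pi_n_block by blast
    show "nondegenerate (2*n+1) (2*n+1) (pi_n n)" by (rule nondegenerate_pi_n)
    show "\<not> amenable (Gamma (2*n+1) (2*n+1) (pi_n n))" using not_amenable_G by (simp add: G_def)
    show "sofic (Gamma (2*n+1) (2*n+1) (pi_n n))" using sofic_G by (simp add: G_def)
  qed
qed

end
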